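(* Let $N$ be a lattice of rank $3$, $\sigma\subset N_{\mathbb R}$ a rational strongly convex polyhedral cone, and $F_1,\ldots,F_\varkappa$ the compact facets of the polyhedron $\mathrm{conv}(\sigma\cap(N\setminus\{\mathbf 0\}))$. Suppose $$\mathbf{Hlb}_N(\sigma)=\Big(\bigcup_{i=1}^{\varkappa}F_i\Big)\cap N.$$ If for each $i$, $\{\mathbf s_{i,1},\ldots,\mathbf s_{i,\pi_i}\}$ is an arbitrary triangulation of $F_i$ into elementary lattice triangles, then $\bigcup_{i=1}^{\varkappa}\bigcup_{j=1}^{\pi_i}\mathrm{pos}(\mathbf s_{i,j})$ constitutes a subdivision of $\sigma$ into basic subcones w.r.t. $N$, such that for all $i,j$ the set of minimal generators of $\mathrm{pos}(\mathbf s_{i,j})$ is contained in $\mathbf{Hlb}_N(\sigma)$.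
   Context: $\mathbf{Hlb}_N(\sigma)$ (Hilbert basis) is the set of nonzero elements of $\sigma\cap N$ that cannot be written as the sum of two nonzero elements of $\sigma\cap N$. A lattice triangle $\mathbf s=\mathrm{conv}(n_0,n_1,n_2)$ ($n_i\in N$) is elementary if its only lattice points (in the lattice generated by $N\cap\mathrm{aff}(\mathbf s)$ after translating) are its vertices, i.e. $\mathbf s\cap N=\{n_0,n_1,n_2\}$. A cone is basic w.r.t. $N$ if its primitive minimal generators form part of a $\mathbb Z$-basis of $N$. *)

theory Defs
  imports "HOL-Analysis.Analysis"
begin

text \<open>The rank 3 lattice N, realised as the standard integer lattice in real^3.\<close>
definition latN :: "(real^3) set" where
  "latN = {x. \<forall>i. x $ i \<in> \<int>}"

text \<open>Positive hull: all nonnegative finite linear combinations (pos of the empty set is {0}).\<close>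
definition pos :: "(real^3) set \<Rightarrow> (real^3) set" where
  "pos S = {\<Sum>v\<in>V. c v *\<^sub>R v | V c. finite V \<and> V \<subseteq> S \<and> (\<forall>v\<in>V. c v \<ge> 0)}"

definition rational_sc_cone :: "(real^3) set \<Rightarrow> bool" where
  "rational_sc_cone \<sigma> \<longleftrightarrow>
     (\<exists>G. finite G \<and> G \<subseteq> latN \<and> \<sigma> = pos G) \<and> \<sigma> \<inter> uminus ` \<sigma> \<subseteq> {0}"

definition Hlb :: "(real^3) set \<Rightarrow> (real^3) set" where
  "Hlb \<sigma> = {x \<in> \<sigma> \<inter> latN - {0}. \<not> (\<exists>a\<in>\<sigma> \<inter> latN - {0}. \<exists>b\<in>\<sigma> \<inter> latN - {0}. x = a + b)}"

definition elementary_triangle :: "(real^3) set \<Rightarrow> bool" where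
  "elementary_triangle s \<longleftrightarrow>
     (\<exists>a b c. a \<in> latN \<and> b \<in> latN \<and> c \<in> latN \<and> card {a, b, c} = 3 \<and>
        \<not> affine_dependent {a, b, c} \<and> s = convex hull {a, b, c} \<and> s \<inter> latN = {a, b, c})"

definition elem_triangulation :: "(real^3) set set \<Rightarrow> (real^3) set \<Rightarrow> bool" where
  "elem_triangulation T F \<longleftrightarrow>
     finite T \<and> (\<forall>s\<in>T. elementary_triangle s) \<and> \<Union>T = F \<and>
     (\<forall>s\<in>T. \<forall>s'\<in>T. (s \<inter> s') face_of s \<and> (s \<inter> s') face_of s')"

definition primitive :: "real^3 \<Rightarrow> bool" where
  "primitive v \<longleftrightarrow> v \<in> latN \<and> v \<noteq> 0 \<and> (\<forall>t. 0 < t \<and> t < 1 \<longrightarrow> t *\<^sub>R v \<notin> latN)"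

definition min_gens :: "(real^3) set \<Rightarrow> (real^3) set" where
  "min_gens \<tau> = {v. primitive v \<and> {t *\<^sub>R v | t. t \<ge> 0} face_of \<tau>}"

definition Z_basis :: "(real^3) set \<Rightarrow> bool" where
  "Z_basis B \<longleftrightarrow> B \<subseteq> latN \<and> independent B \<and>
     (\<forall>x\<in>latN. \<exists>c :: real^3 \<Rightarrow> int. \<exists>B'. finite B' \<and> B' \<subseteq> B \<and> x = (\<Sum>b\<in>B'. of_int (c b) *\<^sub>R b))"

definition basic_cone :: "(real^3) set \<Rightarrow> bool" where
  "basic_cone \<tau> \<longleftrightarrow> (\<exists>B. Z_basis B \<and> min_gens \<tau> \<subseteq> B)"

text \<open>A subdivision of \<sigma> into cones: finitely many cones covering \<sigma> (together with
  the apex 0, to cover the degenerate case \<sigma> = {0}) and meeting pairwise in common faces.\<close>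
definition cone_subdivision :: "(real^3) set set \<Rightarrow> (real^3) set \<Rightarrow> bool" where
  "cone_subdivision C \<sigma> \<longleftrightarrow> finite C \<and> {0} \<union> \<Union>C = \<sigma> \<and>
     (\<forall>\<tau>\<in>C. \<forall>\<tau>'\<in>C. (\<tau> \<inter> \<tau>') face_of \<tau> \<and> (\<tau> \<inter> \<tau>') face_of \<tau>')"

end

theory Submission
  imports Defs
begin

text \<open>
  Let \<open>P\<close> be the convex hull of the nonzero lattice points of \<open>\<sigma>\<close>. As \<open>\<sigma>\<close> is pointed,
  \<open>0 \<notin> P\<close> and \<open>P + \<sigma> \<subseteq> P\<close>; so \<open>P\<close> is \<open>\<sigma>\<close> plus the hull of the finitely many lattice
  points of the fundamental box, a polyhedron, and each ray of \<open>\<sigma>\<close> enters \<open>P\<close> through a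
  compact facet and meets the bounded faces of \<open>P\<close> at most once. Hence the cones over the
  triangles cover \<open>\<sigma>\<close> and meet in cones over common faces: inside one facet by the
  triangulation property, and across two facets because these meet in dimension at most one,
  where lattice-free simplices that overlap coincide.

  For an elementary triangle \<open>abc\<close> on a bounded face, every point \<open>\<alpha>a + \<beta>b + \<gamma>c\<close> of \<open>P\<close>
  with nonnegative coefficients has \<open>\<alpha> + \<beta> + \<gamma> \<ge> 1\<close>. Applied to a nonzero lattice point
  \<open>x\<close> of the half-open parallelepiped spanned by \<open>a, b, c\<close> and to \<open>a + b + c - x\<close>, this
  confines the coefficient sum \<open>m\<close> of \<open>x\<close> to \<open>[1, 2]\<close>. For \<open>m = 1\<close> or \<open>m = 2\<close> one of the two
  points is a lattice point of the triangle other than a vertex; for \<open>1 < m < 2\<close> the point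
  \<open>x\<close> is irreducible, hence lies in \<open>Hlb \<sigma>\<close> and on a bounded face, although \<open>x / m \<in> P\<close>
  lies on the same ray. So \<open>{a, b, c}\<close> is a lattice basis, and the primitive generators of
  the rays of the cone are its vertices, which belong to \<open>Hlb \<sigma>\<close>.
\<close>

section \<open>Lattice points and positive hulls\<close>

lemma latN_add: "x \<in> latN \<Longrightarrow> y \<in> latN \<Longrightarrow> x + y \<in> latN"
  by (auto simp: latN_def)

lemma latN_diff: "x \<in> latN \<Longrightarrow> y \<in> latN \<Longrightarrow> x - y \<in> latN"
  by (auto simp: latN_def)

lemma latN_of_int_scaleR: "x \<in> latN \<Longrightarrow> of_int n *\<^sub>R x \<in> latN"
  by (auto simp: latN_def)

lemma finite_Int_latN:
  assumes "bounded S"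
  shows "finite (S \<inter> latN)"
proof -
  obtain r where r: "\<And>x. x \<in> S \<Longrightarrow> norm x \<le> r"
    using assms bounded_iff by blast
  define I where "I = real_of_int ` {-\<lceil>r\<rceil>..\<lceil>r\<rceil>}"
  define f where "f = (\<lambda>x::real^3. (x$1, x$2, x$3))"
  have "inj_on f (S \<inter> latN)"
    unfolding f_def inj_on_def by (auto simp: vec_eq_iff forall_3)
  moreover have "x $ i \<in> I" if "x \<in> S" "x \<in> latN" for x i
  proof -
    obtain k where k: "x $ i = real_of_int k"
      using \<open>x \<in> latN\<close> unfolding latN_def by (auto elim: Ints_cases)
    have "\<bar>x $ i\<bar> \<le> r"
      using component_le_norm_cart[of x i] r[OF \<open>x \<in> S\<close>] by linarith
    then have "\<bar>k\<bar> \<le> \<lceil>r\<rceil>"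
      using k by linarith
    then show ?thesis
      using k unfolding I_def by (intro image_eqI[of _ _ k]) auto
  qed
  then have "f ` (S \<inter> latN) \<subseteq> I \<times> I \<times> I"
    unfolding f_def by auto
  ultimately show ?thesis
    unfolding I_def by (metis finite_SigmaI finite_atLeastAtMost_int finite_imageI
        finite_subset finite_imageD)
qed

lemma sum_delta_scaleR:
  fixes G :: "'a::real_vector set"
  assumes "finite G" "g \<in> G"
  shows "(\<Sum>h\<in>G. (if h = g then t else 0) *\<^sub>R h) = t *\<^sub>R g"
proof -
  have "(\<Sum>h\<in>G. (if h = g then t else 0) *\<^sub>R h) = (\<Sum>h\<in>G. if h = g then t *\<^sub>R g else 0)"
    by (rule sum.cong) auto
  then show ?thesis
    using assms by simp
qed

lemma convex_cone_sum:
  assumes "convex_cone S" "V \<subseteq> S" "\<And>v. v \<in> V \<Longrightarrow> 0 \<le> c v"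
  shows "(\<Sum>v\<in>V. c v *\<^sub>R v) \<in> S"
proof (cases "finite V")
  case True
  then show ?thesis
    using assms(2,3)
    by (induction V rule: finite_induct)
      (auto intro: convex_cone_add convex_cone_scaleR convex_cone_contains_0 assms(1))
qed (use assms(1) convex_cone_contains_0 in simp)

lemma convex_cone_hull_finite:
  fixes V :: "'a::real_vector set"
  assumes "finite V"
  shows "convex_cone hull V = {\<Sum>v\<in>V. c v *\<^sub>R v | c. \<forall>v\<in>V. 0 \<le> c v}"
    (is "_ = ?C")
proof
  have "convex_cone ?C"
    unfolding convex_cone_iff
  proof (intro conjI ballI allI impI)
    show "0 \<in> ?C"
      by (intro CollectI exI[of _ "\<lambda>_. 0"]) simp
  next
    fix x y assume "x \<in> ?C" "y \<in> ?C"
    then obtain c d where "\<forall>v\<in>V. 0 \<le> c v" "\<forall>v\<in>V. 0 \<le> d v"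
      "x = (\<Sum>v\<in>V. c v *\<^sub>R v)" "y = (\<Sum>v\<in>V. d v *\<^sub>R v)"
      by blast
    then show "x + y \<in> ?C"
      by (intro CollectI exI[of _ "\<lambda>v. c v + d v"]) (auto simp: scaleR_add_left sum.distrib)
  next
    fix x and t :: real assume "x \<in> ?C" "0 \<le> t"
    then obtain c where "\<forall>v\<in>V. 0 \<le> c v" "x = (\<Sum>v\<in>V. c v *\<^sub>R v)"
      by blast
    with \<open>0 \<le> t\<close> show "t *\<^sub>R x \<in> ?C"
      by (intro CollectI exI[of _ "\<lambda>v. t * c v"]) (auto simp: scaleR_sum_right)
  qed
  moreover have "V \<subseteq> ?C"
  proof
    fix g assume "g \<in> V"
    then show "g \<in> ?C"
      using sum_delta_scaleR[OF assms, of g 1] by (intro CollectI exI[of _ "\<lambda>h. if h = g then 1 else 0"]) auto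
  qed
  ultimately show "convex_cone hull V \<subseteq> ?C"
    by (rule hull_minimal[rotated])
  show "?C \<subseteq> convex_cone hull V"
    using convex_cone_sum[OF convex_cone_convex_cone_hull hull_subset] by blast
qed

lemma pos_eq_Union_convex_cone_hull:
  "pos S = \<Union>{convex_cone hull V | V. finite V \<and> V \<subseteq> S}"
proof (intro set_eqI iffI)
  fix x assume "x \<in> pos S"
  then obtain V c where "finite V" "V \<subseteq> S" "\<forall>v\<in>V. 0 \<le> c v" "x = (\<Sum>v\<in>V. c v *\<^sub>R v)"
    unfolding pos_def by blast
  then show "x \<in> \<Union>{convex_cone hull V | V. finite V \<and> V \<subseteq> S}"
    using convex_cone_hull_finite[of V] by blast
next
  fix x assume "x \<in> \<Union>{convex_cone hull V | V. finite V \<and> V \<subseteq> S}"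
  then obtain V where "finite V" "V \<subseteq> S" "x \<in> convex_cone hull V"
    by blast
  then show "x \<in> pos S"
    unfolding pos_def convex_cone_hull_finite[OF \<open>finite V\<close>] by blast
qed

lemma pos_eq_convex_cone_hull: "pos S = convex_cone hull S"
proof (rule subset_antisym)
  show "pos S \<subseteq> convex_cone hull S"
    unfolding pos_eq_Union_convex_cone_hull by (auto dest: hull_mono)
  have "convex_cone (pos S)"
    unfolding convex_cone_iff
  proof (intro conjI ballI allI impI)
    show "0 \<in> pos S"
      unfolding pos_eq_Union_convex_cone_hull using convex_cone_hull_contains_0[of "{}"] by blast
  next
    fix x y assume "x \<in> pos S" "y \<in> pos S"
    then obtain V W where "finite V" "V \<subseteq> S" "x \<in> convex_cone hull V"
      "finite W" "W \<subseteq> S" "y \<in> convex_cone hull W"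
      unfolding pos_eq_Union_convex_cone_hull by blast
    then have "x + y \<in> convex_cone hull (V \<union> W)"
      by (meson convex_cone_hull_add hull_mono subsetD sup_ge1 sup_ge2)
    then show "x + y \<in> pos S"
      unfolding pos_eq_Union_convex_cone_hull
      using \<open>V \<subseteq> S\<close> \<open>W \<subseteq> S\<close> \<open>finite V\<close> \<open>finite W\<close> by blast
  next
    fix x and t :: real assume "x \<in> pos S" "0 \<le> t"
    then show "t *\<^sub>R x \<in> pos S"
      unfolding pos_eq_Union_convex_cone_hull using convex_cone_hull_mul by blast
  qed
  moreover have "S \<subseteq> pos S"
  proof
    fix v assume "v \<in> S"
    then have "v \<in> convex_cone hull {v}" "finite {v}" "{v} \<subseteq> S"
      by (auto intro: hull_inc)
    then show "v \<in> pos S"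
      unfolding pos_eq_Union_convex_cone_hull by blast
  qed
  ultimately show "convex_cone hull S \<subseteq> pos S"
    by (rule hull_minimal[rotated])
qed

lemma convex_cone_hull_convex_hull_eq: "convex_cone hull (convex hull S) = convex_cone hull S"
  by (metis convex_hull_subset_convex_cone_hull hull_hull hull_mono hull_subset subset_antisym)

lemma convex_cone_hull_of_convex:
  assumes "convex S"
  shows "convex_cone hull S = insert 0 {t *\<^sub>R y | t y. 0 \<le> t \<and> y \<in> S}"
  using convex_cone_hull_convex_hull[of S] unfolding hull_same[of convex, OF assms] by auto

section \<open>Cones over linearly independent vectors\<close>

lemma convex_cone_hull_3:
  fixes a b c :: "'a::real_vector"
  assumes "a \<noteq> b" "a \<noteq> c" "b \<noteq> c"
  shows "convex_cone hull {a, b, c} =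
    {\<alpha> *\<^sub>R a + \<beta> *\<^sub>R b + \<gamma> *\<^sub>R c | \<alpha> \<beta> \<gamma>. 0 \<le> \<alpha> \<and> 0 \<le> \<beta> \<and> 0 \<le> \<gamma>}"
proof -
  have sum3: "(\<Sum>v\<in>{a, b, c}. f v *\<^sub>R v) = f a *\<^sub>R a + f b *\<^sub>R b + f c *\<^sub>R c" for f
    using assms by (simp add: add.assoc)
  have "\<exists>f. (\<forall>v\<in>{a, b, c}. 0 \<le> f v) \<and> f a = \<alpha> \<and> f b = \<beta> \<and> f c = \<gamma>"
    if "0 \<le> \<alpha>" "0 \<le> \<beta>" "0 \<le> \<gamma>" for \<alpha> \<beta> \<gamma>
    using assms that by (intro exI[of _ "\<lambda>v. if v = a then \<alpha> else if v = b then \<beta> else \<gamma>"]) auto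
  then show ?thesis
    unfolding convex_cone_hull_finite[of "{a, b, c}", simplified] sum3 by fastforce
qed

lemma independent_3_coeffs_eq:
  fixes a b c :: "'a::euclidean_space"
  assumes "independent {a, b, c}" "a \<noteq> b" "a \<noteq> c" "b \<noteq> c"
    and "\<alpha> *\<^sub>R a + \<beta> *\<^sub>R b + \<gamma> *\<^sub>R c = \<alpha>' *\<^sub>R a + \<beta>' *\<^sub>R b + \<gamma>' *\<^sub>R c"
  shows "\<alpha> = \<alpha>' \<and> \<beta> = \<beta>' \<and> \<gamma> = \<gamma>'"
proof -
  define f where "f v = (if v = a then \<alpha> - \<alpha>' else if v = b then \<beta> - \<beta>' else \<gamma> - \<gamma>')" for v
  have "(\<Sum>v\<in>{a, b, c}. f v *\<^sub>R v) = 0"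
    using assms(2-5) by (simp add: f_def add.assoc algebra_simps)
  then have "\<forall>v\<in>{a, b, c}. f v = 0"
    using assms(1) unfolding independent_explicit by blast
  then show ?thesis
    using assms(2-4) by (auto simp: f_def)
qed

lemma independent_coeffs_eq:
  fixes V :: "'a::euclidean_space set"
  assumes "independent V" "(\<Sum>v\<in>V. c v *\<^sub>R v) = (\<Sum>v\<in>V. d v *\<^sub>R v)" "v \<in> V"
  shows "c v = d v"
proof -
  have "(\<Sum>v\<in>V. (c v - d v) *\<^sub>R v) = 0"
    using assms(2) by (simp add: scaleR_diff_left sum_subtractf)
  then show ?thesis
    using assms(1,3) unfolding independent_explicit by fastforce
qed

lemma convex_cone_hull_subset_face_of:
  fixes V :: "'a::euclidean_space set"
  assumes "independent V" "W \<subseteq> V"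
  shows "convex_cone hull W face_of convex_cone hull V"
proof -
  have "finite V" "finite W"
    using assms independent_explicit finite_subset by blast+
  have extend: "(\<Sum>v\<in>V. (if v \<in> W then c v else 0) *\<^sub>R v) = (\<Sum>v\<in>W. c v *\<^sub>R v)" for c
    using \<open>finite V\<close> assms(2) by (intro sum.mono_neutral_cong_right) auto
  have in_W: "(\<Sum>v\<in>V. c v *\<^sub>R v) \<in> convex_cone hull W"
    if "\<forall>v\<in>V. 0 \<le> c v" "\<forall>v\<in>V - W. c v = 0" for c
  proof -
    have "(\<Sum>v\<in>V. c v *\<^sub>R v) = (\<Sum>v\<in>W. c v *\<^sub>R v)"
      using that \<open>finite V\<close> assms(2) by (intro sum.mono_neutral_right) auto
    then show ?thesis
      using that assms(2) unfolding convex_cone_hull_finite[OF \<open>finite W\<close>] by auto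
  qed
  show ?thesis
    unfolding face_of_def
  proof (intro conjI ballI impI)
    show "convex_cone hull W \<subseteq> convex_cone hull V"
      using assms(2) by (rule hull_mono)
    show "convex (convex_cone hull W)"
      by (rule convex_convex_cone_hull)
    fix p q x assume "p \<in> convex_cone hull V" "q \<in> convex_cone hull V"
      and "x \<in> convex_cone hull W" "x \<in> open_segment p q"
    then obtain cp cq cx u where cp: "\<forall>v\<in>V. 0 \<le> cp v" "p = (\<Sum>v\<in>V. cp v *\<^sub>R v)"
      and cq: "\<forall>v\<in>V. 0 \<le> cq v" "q = (\<Sum>v\<in>V. cq v *\<^sub>R v)"
      and cx: "x = (\<Sum>v\<in>W. cx v *\<^sub>R v)"
      and u: "0 < u" "u < 1" "x = (1 - u) *\<^sub>R p + u *\<^sub>R q"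
      unfolding convex_cone_hull_finite[OF \<open>finite V\<close>] convex_cone_hull_finite[OF \<open>finite W\<close>] in_segment
      by blast
    have "(\<Sum>v\<in>V. (if v \<in> W then cx v else 0) *\<^sub>R v) = (\<Sum>v\<in>V. ((1 - u) * cp v + u * cq v) *\<^sub>R v)"
      using u(3) cp(2) cq(2) cx extend
      by (simp add: scaleR_add_left sum.distrib scaleR_sum_right)
    then have "(1 - u) * cp v + u * cq v = 0" if "v \<in> V - W" for v
      using independent_coeffs_eq[OF assms(1)] that by fastforce
    moreover have "0 \<le> (1 - u) * cp v" "0 \<le> u * cq v" if "v \<in> V" for v
      using cp(1) cq(1) u that by auto
    ultimately have "cp v = 0 \<and> cq v = 0" if "v \<in> V - W" for v
      using u that by (smt (verit) DiffD1 mult_eq_0_iff)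
    then show "p \<in> convex_cone hull W" "q \<in> convex_cone hull W"
      using in_W cp cq by auto
  qed
qed

lemma ray_face_of_convex_cone_hull_3_coeffs:
  fixes a b c v :: "'a::euclidean_space"
  assumes "independent {a, b, c}" "a \<noteq> b" "a \<noteq> c" "b \<noteq> c"
    and "{t *\<^sub>R v | t. 0 \<le> t} face_of convex_cone hull {a, b, c}"
    and "v = \<alpha> *\<^sub>R a + \<beta> *\<^sub>R b + \<gamma> *\<^sub>R c" "0 < \<alpha>" "0 \<le> \<beta>" "0 \<le> \<gamma>"
  shows "\<beta> = 0 \<and> \<gamma> = 0"
proof -
  note coeffs_eq = independent_3_coeffs_eq[OF assms(1-4)]
  define p where "p = (2 * \<alpha>) *\<^sub>R a + 0 *\<^sub>R b + 0 *\<^sub>R c"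
  define q where "q = 0 *\<^sub>R a + (2 * \<beta>) *\<^sub>R b + (2 * \<gamma>) *\<^sub>R c"
  have "p \<in> convex_cone hull {a, b, c}"
    unfolding p_def convex_cone_hull_3[OF assms(2-4)]
    using assms(7) by (intro CollectI exI[of _ "2 * \<alpha>"] exI[of _ 0]) auto
  have "q \<in> convex_cone hull {a, b, c}"
    unfolding q_def convex_cone_hull_3[OF assms(2-4)]
    using assms(8,9) by (intro CollectI exI[of _ 0] exI[of _ "2 * \<beta>"] exI[of _ "2 * \<gamma>"]) auto
  have "p \<noteq> q"
    using coeffs_eq[of "2 * \<alpha>" 0 0 0] assms(7) unfolding p_def q_def by auto
  moreover have "v = (1 - 1/2) *\<^sub>R p + (1/2) *\<^sub>R q"
    unfolding p_def q_def assms(6) by (simp add: algebra_simps)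
  ultimately have "v \<in> open_segment p q"
    unfolding in_segment by (intro conjI exI[of _ "1/2"]) auto
  moreover have "v \<in> {t *\<^sub>R v | t. 0 \<le> t}"
    by (intro CollectI exI[of _ 1]) simp
  ultimately have "p \<in> {t *\<^sub>R v | t. 0 \<le> t}"
    using face_ofD[OF assms(5)] \<open>p \<in> convex_cone hull {a, b, c}\<close> \<open>q \<in> convex_cone hull {a, b, c}\<close>
    by blast
  then obtain t where "(2 * \<alpha>) *\<^sub>R a + 0 *\<^sub>R b + 0 *\<^sub>R c = (t * \<alpha>) *\<^sub>R a + (t * \<beta>) *\<^sub>R b + (t * \<gamma>) *\<^sub>R c"
    unfolding p_def assms(6) by (auto simp: algebra_simps)
  then have "2 * \<alpha> = t * \<alpha>" "0 = t * \<beta>" "0 = t * \<gamma>"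
    using coeffs_eq by blast+
  then show ?thesis
    using assms(7) by simp
qed

lemma ray_face_of_convex_cone_hull_3:
  fixes a b c v :: "'a::euclidean_space"
  assumes "independent {a, b, c}" "a \<noteq> b" "a \<noteq> c" "b \<noteq> c"
    and "{t *\<^sub>R v | t. 0 \<le> t} face_of convex_cone hull {a, b, c}" "v \<noteq> 0"
  shows "\<exists>w\<in>{a, b, c}. \<exists>\<alpha>>0. v = \<alpha> *\<^sub>R w"
proof -
  have "v \<in> convex_cone hull {a, b, c}"
    using face_of_imp_subset[OF assms(5)] by (force intro: exI[of _ 1])
  then obtain \<alpha> \<beta> \<gamma> where v: "v = \<alpha> *\<^sub>R a + \<beta> *\<^sub>R b + \<gamma> *\<^sub>R c" "0 \<le> \<alpha>" "0 \<le> \<beta>" "0 \<le> \<gamma>"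
    unfolding convex_cone_hull_3[OF assms(2-4)] by blast
  have "{b, c, a} = {a, b, c}" "{c, a, b} = {a, b, c}"
    by auto
  then have perm: "independent {b, c, a}" "independent {c, a, b}"
    "{t *\<^sub>R v | t. 0 \<le> t} face_of convex_cone hull {b, c, a}"
    "{t *\<^sub>R v | t. 0 \<le> t} face_of convex_cone hull {c, a, b}"
    using assms(1,5) by simp_all
  consider "0 < \<alpha>" | "0 < \<beta>" | "0 < \<gamma>"
    using v assms(6) by force
  then show ?thesis
  proof cases
    case 1
    then show ?thesis
      using ray_face_of_convex_cone_hull_3_coeffs[OF assms(1-5) v(1) 1 v(3,4)] v(1) 1 by auto
  next
    case 2
    have "v = \<beta> *\<^sub>R b + \<gamma> *\<^sub>R c + \<alpha> *\<^sub>R a"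
      using v(1) by (simp add: ac_simps)
    then show ?thesis
      using ray_face_of_convex_cone_hull_3_coeffs[OF perm(1) _ _ _ perm(3) _ 2 v(4,2)] assms(2-4) 2
      by auto
  next
    case 3
    have "v = \<gamma> *\<^sub>R c + \<alpha> *\<^sub>R a + \<beta> *\<^sub>R b"
      using v(1) by (simp add: ac_simps)
    then show ?thesis
      using ray_face_of_convex_cone_hull_3_coeffs[OF perm(2) _ _ _ perm(4) _ 3 v(2,3)] assms(2-4) 3
      by auto
  qed
qed

section \<open>Lattice-free segments and simplices\<close>

lemma open_segment_on_line:
  fixes p d :: "'a::real_vector"
  assumes "d \<noteq> 0"
  shows "open_segment (p + x *\<^sub>R d) (p + y *\<^sub>R d) = (\<lambda>l. p + l *\<^sub>R d) ` open_segment x y"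
proof -
  have lin: "linear (\<lambda>l::real. l *\<^sub>R d)"
    by (simp add: linear_iff scaleR_add_left)
  have inj: "inj (\<lambda>l::real. l *\<^sub>R d)"
    using assms by (auto simp: inj_on_def)
  have "open_segment (p + x *\<^sub>R d) (p + y *\<^sub>R d) = (+) p ` (\<lambda>l. l *\<^sub>R d) ` open_segment x y"
    unfolding open_segment_translation open_segment_linear_image[OF lin inj] ..
  then show ?thesis
    by (simp add: image_image)
qed

lemma real_lattice_free_segments_eq:
  fixes a b u v :: real
  assumes "{a, b, u, v} \<subseteq> L" "open_segment a b \<inter> L = {}" "open_segment u v \<inter> L = {}"
    and "open_segment a b \<inter> open_segment u v \<noteq> {}"
  shows "{u, v} = {a, b}"
proof -
  have seg: "open_segment x y = {min x y<..<max x y}" for x y :: real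
    by (auto simp: open_segment_eq_real_ivl min_def max_def)
  have ends: "{min x y, max x y} = {x, y}" for x y :: real
    by (auto simp: min_def max_def)
  obtain m where "m \<in> {min a b<..<max a b} \<inter> {min u v<..<max u v}"
    using assms(4) unfolding seg by blast
  moreover have "min u v \<notin> {min a b<..<max a b}" "max u v \<notin> {min a b<..<max a b}"
    "min a b \<notin> {min u v<..<max u v}" "max a b \<notin> {min u v<..<max u v}"
    using assms(1-3) ends[of u v] ends[of a b] unfolding seg by blast+
  ultimately have "min u v = min a b" "max u v = max a b"
    by auto
  then show ?thesis
    using ends by metis
qed

lemma lattice_free_collinear_segments_eq:
  fixes p q p' q' :: "'a::real_vector"
  assumes "p \<noteq> q" "p' \<in> affine hull {p, q}" "q' \<in> affine hull {p, q}" "{p, q, p', q'} \<subseteq> L"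
    and "open_segment p q \<inter> L = {}" "open_segment p' q' \<inter> L = {}"
    and "open_segment p q \<inter> open_segment p' q' \<noteq> {}"
  shows "{p', q'} = {p, q}"
proof -
  define \<phi> where "\<phi> l = p + l *\<^sub>R (q - p)" for l :: real
  have "inj \<phi>"
  proof (rule injI)
    fix x y assume "\<phi> x = \<phi> y"
    then have "x *\<^sub>R (q - p) = y *\<^sub>R (q - p)"
      unfolding \<phi>_def by (rule add_left_imp_eq)
    then show "x = y"
      using assms(1) by (simp only: scaleR_cancel_right) simp
  qed
  have seg: "open_segment (\<phi> x) (\<phi> y) = \<phi> ` open_segment x y" for x y
    unfolding \<phi>_def using assms(1) by (intro open_segment_on_line) simp
  have on_line: "\<exists>l. x = \<phi> l" if x: "x \<in> affine hull {p, q}" for x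
  proof -
    obtain s t where "x = s *\<^sub>R p + t *\<^sub>R q" "s + t = 1"
      using x unfolding affine_hull_2 by blast
    then have "x = \<phi> t"
      unfolding \<phi>_def by (simp add: algebra_simps flip: eq_diff_eq)
    then show ?thesis ..
  qed
  obtain u v where uv: "p' = \<phi> u" "q' = \<phi> v"
    using on_line assms(2,3) by blast
  have ends: "p = \<phi> 0" "q = \<phi> 1"
    unfolding \<phi>_def by simp_all
  have "{u, v} = {0, 1}"
  proof (rule real_lattice_free_segments_eq[where L = "\<phi> -` L"])
    show "{0, 1, u, v} \<subseteq> \<phi> -` L"
      using assms(4) ends uv by auto
    show "open_segment 0 1 \<inter> \<phi> -` L = {}" "open_segment u v \<inter> \<phi> -` L = {}"
      using assms(5,6) seg[of 0 1] seg[of u v] ends uv by auto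
    show "open_segment 0 1 \<inter> open_segment u v \<noteq> {}"
      using assms(7) seg[of 0 1] seg[of u v] ends uv \<open>inj \<phi>\<close> by (auto dest: injD)
  qed
  then have "\<phi> ` {u, v} = \<phi> ` {0, 1}"
    by simp
  then show ?thesis
    using ends uv by simp
qed

lemma convex_hull_subset_Int_lattice_free:
  fixes V :: "'a::real_vector set"
  assumes "\<not> affine_dependent V" "convex hull V \<inter> L = V" "W \<subseteq> V"
  shows "convex hull W \<inter> L = W"
proof (intro subset_antisym subsetI)
  fix x assume x: "x \<in> convex hull W \<inter> L"
  have "convex hull W \<subseteq> convex hull V"
    using assms(3) by (rule hull_mono)
  then have "x \<in> V"
    using assms(2) x by blast
  show "x \<in> W"
  proof (rule ccontr)
    assume "x \<notin> W"
    then have "W \<subseteq> V - {x}"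
      using assms(3) by blast
    then have "convex hull W \<subseteq> affine hull (V - {x})"
      using convex_hull_subset_affine_hull hull_mono by blast
    then show False
      using assms(1) x \<open>x \<in> V\<close> unfolding affine_dependent_def by blast
  qed
next
  fix x assume "x \<in> W"
  moreover have "V \<subseteq> L"
    using assms(2) by blast
  ultimately show "x \<in> convex hull W \<inter> L"
    using assms(3) by (auto intro: hull_inc)
qed

lemma exists_subset_in_rel_interior_convex_hull:
  fixes V :: "'a::euclidean_space set"
  assumes "\<not> affine_dependent V" "z \<in> convex hull V"
  obtains W where "W \<subseteq> V" "z \<in> rel_interior (convex hull W)"
proof -
  have "finite V"
    using assms(1) aff_independent_finite by blast
  then obtain u where u: "\<forall>x\<in>V. 0 \<le> u x" "sum u V = 1" "(\<Sum>x\<in>V. u x *\<^sub>R x) = z"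
    using assms(2) unfolding convex_hull_finite[OF \<open>finite V\<close>] by blast
  define W where "W = {v\<in>V. 0 < u v}"
  have "W \<subseteq> V" "\<not> affine_dependent W"
    unfolding W_def using assms(1) affine_dependent_subset by auto
  have "\<forall>x\<in>V - W. u x = 0"
    using u(1) unfolding W_def by force
  then have "sum u W = sum u V" "(\<Sum>x\<in>W. u x *\<^sub>R x) = (\<Sum>x\<in>V. u x *\<^sub>R x)"
    using \<open>finite V\<close> \<open>W \<subseteq> V\<close> by (auto intro: sum.mono_neutral_left)
  with u(2,3) have "sum u W = 1" "(\<Sum>x\<in>W. u x *\<^sub>R x) = z"
    by simp_all
  then have "z \<in> rel_interior (convex hull W)"
    unfolding rel_interior_convex_hull_explicit[OF \<open>\<not> affine_dependent W\<close>]
    by (intro CollectI exI[of _ u]) (auto simp: W_def)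
  then show ?thesis
    using that \<open>W \<subseteq> V\<close> by blast
qed

lemma rel_interior_convex_hull_2:
  fixes p q :: "'a::euclidean_space"
  assumes "p \<noteq> q"
  shows "rel_interior (convex hull {p, q}) = open_segment p q"
  using rel_interior_closed_segment[of p q] assms by (simp add: segment_convex_hull)

lemma lattice_free_simplex_eq_singleton:
  fixes B :: "'a::euclidean_space set"
  assumes "w \<in> L" "w \<in> rel_interior (convex hull B)" "convex hull B \<inter> L = B" "card B \<in> {1, 2}"
  shows "B = {w}"
proof -
  consider b where "B = {b}" | p q where "B = {p, q}" "p \<noteq> q"
    using assms(4) by (auto simp: card_1_singleton_iff card_2_iff)
  then show ?thesis
  proof cases
    case 1
    then show ?thesis
      using assms(2) by simp
  next
    case 2
    have "w \<in> B"
      using assms(1-3) rel_interior_subset by blast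
    moreover have "w \<in> open_segment p q"
      using assms(2) rel_interior_convex_hull_2[OF 2(2)] 2(1) by simp
    ultimately show ?thesis
      using 2 by (auto simp: open_segment_def)
  qed
qed

lemma subset_affine_hull_of_independent_card:
  fixes S T :: "'a::euclidean_space set"
  assumes "S \<subseteq> T" "\<not> affine_dependent S" "aff_dim T + 1 \<le> int (card S)"
  shows "T \<subseteq> affine hull S"
proof
  fix x assume "x \<in> T"
  show "x \<in> affine hull S"
  proof (rule ccontr)
    assume "x \<notin> affine hull S"
    then have "\<not> affine_dependent (insert x S)" "x \<notin> S"
      using affine_independent_insert[OF assms(2)] hull_inc by metis+
    then have "card (insert x S) = card S + 1"
      using aff_independent_finite[OF assms(2)] by simp
    moreover have "int (card (insert x S)) \<le> aff_dim T + 1"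
      using independent_card_le_aff_dim \<open>x \<in> T\<close> assms(1) \<open>\<not> affine_dependent (insert x S)\<close> by blast
    ultimately show False
      using assms(3) by linarith
  qed
qed

lemma lattice_free_simplices_eq:
  fixes W W' :: "'a::euclidean_space set"
  assumes "\<not> affine_dependent W" "\<not> affine_dependent W'"
    and "convex hull W \<inter> L = W" "convex hull W' \<inter> L = W'"
    and "aff_dim (W \<union> W') \<le> 1"
    and "rel_interior (convex hull W) \<inter> rel_interior (convex hull W') \<noteq> {}"
  shows "W = W'"
proof -
  have card: "card A \<in> {1, 2}" if "A \<subseteq> W \<union> W'" "\<not> affine_dependent A" "A \<noteq> {}" for A
  proof -
    have "int (card A) \<le> 2"
      using independent_card_le_aff_dim[OF that(1,2)] assms(5) by linarith
    moreover have "card A \<noteq> 0"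
      using that(3) aff_independent_finite[OF that(2)] by simp
    ultimately show ?thesis
      by auto
  qed
  obtain z where z: "z \<in> rel_interior (convex hull W)" "z \<in> rel_interior (convex hull W')"
    using assms(6) by blast
  then have "W \<noteq> {}" "W' \<noteq> {}"
    by auto
  then have cards: "card W \<in> {1, 2}" "card W' \<in> {1, 2}"
    using card assms(1,2) by auto
  have "W \<union> W' \<subseteq> L"
    using assms(3,4) by blast
  consider w where "W = {w}" | w where "W' = {w}" | p q p' q' where
    "W = {p, q}" "p \<noteq> q" "W' = {p', q'}" "p' \<noteq> q'"
    using cards by (auto simp: card_1_singleton_iff card_2_iff)
  then show ?thesis
  proof cases
    case 1
    have "w \<in> L" "w \<in> rel_interior (convex hull W')"
      using \<open>W \<union> W' \<subseteq> L\<close> z 1 by auto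
    then show ?thesis
      using lattice_free_simplex_eq_singleton[OF _ _ assms(4) cards(2)] 1 by simp
  next
    case 2
    have "w \<in> L" "w \<in> rel_interior (convex hull W)"
      using \<open>W \<union> W' \<subseteq> L\<close> z 2 by auto
    then show ?thesis
      using lattice_free_simplex_eq_singleton[OF _ _ assms(3) cards(1)] 2 by simp
  next
    case 3
    have "W \<union> W' \<subseteq> affine hull W"
      using subset_affine_hull_of_independent_card[of W "W \<union> W'"] assms(1,5) 3(1,2) by simp
    moreover have "open_segment p q \<subseteq> convex hull W - W" "open_segment p' q' \<subseteq> convex hull W' - W'"
      using 3 by (auto simp: open_segment_def segment_convex_hull)
    then have "open_segment p q \<inter> L = {}" "open_segment p' q' \<inter> L = {}"
      using assms(3,4) by blast+
    moreover have "z \<in> open_segment p q \<inter> open_segment p' q'"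
      using z 3 rel_interior_convex_hull_2[OF 3(2)] rel_interior_convex_hull_2[OF 3(4)] by simp
    ultimately have "{p', q'} = {p, q}"
      using lattice_free_collinear_segments_eq[of p q p' q' L] \<open>W \<union> W' \<subseteq> L\<close> 3 by auto
    then show ?thesis
      using 3 by simp
  qed
qed

lemma aff_dim_Int_distinct_facets:
  fixes S :: "'a::euclidean_space set"
  assumes "F facet_of S" "F' facet_of S" "F \<noteq> F'"
  shows "aff_dim (F \<inter> F') < aff_dim S - 1"
proof -
  have faces: "F face_of S" "F' face_of S"
    using assms facet_of_imp_face_of by blast+
  then have "F \<inter> F' face_of F"
    using face_of_subset[OF face_of_Int[OF faces] _ face_of_imp_subset[OF faces(1)]] by blast
  moreover have "F \<inter> F' \<noteq> F"
  proof
    assume "F \<inter> F' = F"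
    then have "F face_of F'"
      using face_of_subset[OF faces(1) _ face_of_imp_subset[OF faces(2)]] by blast
    then have "aff_dim F < aff_dim F'"
      using face_of_aff_dim_lt[OF face_of_imp_convex[OF faces(2)]] assms(3) by blast
    then show False
      using assms(1,2) unfolding facet_of_def by simp
  qed
  ultimately have "aff_dim (F \<inter> F') < aff_dim F"
    using face_of_aff_dim_lt[OF face_of_imp_convex[OF faces(1)]] by blast
  then show ?thesis
    using assms(1) unfolding facet_of_def by simp
qed

lemma convex_hull_Int_lattice_free_in_distinct_facets:
  fixes S :: "'a::euclidean_space set"
  assumes "aff_dim S \<le> 3"
    and "\<not> affine_dependent V" "convex hull V \<inter> L = V" "F facet_of S" "convex hull V \<subseteq> F"
    and "\<not> affine_dependent V'" "convex hull V' \<inter> L = V'" "F' facet_of S" "convex hull V' \<subseteq> F'"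
    and "F \<noteq> F'"
  shows "convex hull V \<inter> convex hull V' = convex hull (V \<inter> V')"
proof (intro subset_antisym subsetI)
  fix z assume "z \<in> convex hull V \<inter> convex hull V'"
  then have "z \<in> convex hull V" "z \<in> convex hull V'"
    by auto
  obtain W where W: "W \<subseteq> V" "z \<in> rel_interior (convex hull W)"
    using exists_subset_in_rel_interior_convex_hull[OF assms(2) \<open>z \<in> convex hull V\<close>] by blast
  obtain W' where W': "W' \<subseteq> V'" "z \<in> rel_interior (convex hull W')"
    using exists_subset_in_rel_interior_convex_hull[OF assms(6) \<open>z \<in> convex hull V'\<close>] by blast
  have faces: "F face_of S" "F' face_of S"
    using assms(4,8) facet_of_imp_face_of by blast+
  have "convex hull W \<subseteq> convex hull V" "convex hull W' \<subseteq> convex hull V'"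
    using W(1) W'(1) by (simp_all add: hull_mono)
  then have hulls: "convex hull W \<subseteq> F" "convex hull W' \<subseteq> F'"
    using assms(5,9) by blast+
  have "z \<in> F" "z \<in> F'"
    using W(2) W'(2) hulls rel_interior_subset by blast+
  have across: "convex hull A \<subseteq> F2"
    if "F1 face_of S" "F2 face_of S" "convex hull A \<subseteq> F1" "z \<in> rel_interior (convex hull A)" "z \<in> F2"
    for A F1 F2
    using subset_of_face_of[OF that(2)] face_of_imp_subset[OF that(1)] that(3-5) by blast
  have "convex hull W \<subseteq> F'" "convex hull W' \<subseteq> F"
    using across[OF faces hulls(1) W(2) \<open>z \<in> F'\<close>] across[OF faces(2,1) hulls(2) W'(2) \<open>z \<in> F\<close>] .
  then have "W \<union> W' \<subseteq> F \<inter> F'"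
    using hulls hull_subset[of W convex] hull_subset[of W' convex] by blast
  then have "aff_dim (W \<union> W') \<le> aff_dim (F \<inter> F')"
    by (rule aff_dim_subset)
  then have "aff_dim (W \<union> W') \<le> 1"
    using aff_dim_Int_distinct_facets[OF assms(4,8,10)] assms(1) by linarith
  moreover have "\<not> affine_dependent W" "\<not> affine_dependent W'"
    using assms(2,6) W(1) W'(1) affine_dependent_subset by blast+
  moreover have "convex hull W \<inter> L = W" "convex hull W' \<inter> L = W'"
    using convex_hull_subset_Int_lattice_free assms(2,3,6,7) W(1) W'(1) by blast+
  ultimately have "W = W'"
    using lattice_free_simplices_eq[of W W' L] W(2) W'(2) by blast
  then have "convex hull W \<subseteq> convex hull (V \<inter> V')"
    using W(1) W'(1) by (simp add: hull_mono)
  then show "z \<in> convex hull (V \<inter> V')"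
    using W(2) rel_interior_subset by blast
next
  fix x assume "x \<in> convex hull (V \<inter> V')"
  moreover have "convex hull (V \<inter> V') \<subseteq> convex hull V" "convex hull (V \<inter> V') \<subseteq> convex hull V'"
    by (simp_all add: hull_mono)
  ultimately show "x \<in> convex hull V \<inter> convex hull V'"
    by blast
qed

section \<open>Polyhedra\<close>

lemma convex_cone_hull_homogenization:
  fixes G K :: "'a::euclidean_space set"
  shows "convex_cone hull ((K \<times> {1::real}) \<union> (G \<times> {0})) \<inter> {w. (0, 1) \<bullet> w = 1} =
    (\<lambda>x. (x, 1)) ` (\<Union>v\<in>convex_cone hull G. \<Union>k\<in>convex hull K. {v + k})"
    (is "?Q \<inter> ?H = _ ` ?R")
proof -
  have "linear (\<lambda>x::'a. (x, 0::real))"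
    by (auto simp: linear_iff)
  moreover have "G \<times> {0::real} = (\<lambda>x. (x, 0)) ` G"
    by auto
  ultimately have ccG: "convex_cone hull (G \<times> {0::real}) = (\<lambda>x. (x, 0)) ` (convex_cone hull G)"
    by (simp add: convex_cone_hull_linear_image)
  show ?thesis
  proof (intro subset_antisym subsetI)
    fix w :: "'a \<times> real" assume w: "w \<in> ?Q \<inter> ?H"
    then obtain x v where xv: "x \<in> convex_cone hull (K \<times> {1})" "v \<in> convex_cone hull G" "w = x + (v, 0)"
      unfolding convex_cone_hull_Un ccG by blast
    have "snd x = 1"
      using w xv(3) by (cases x) (simp add: inner_Pair)
    then obtain p t where p: "p \<in> convex hull (K \<times> {1})" "x = t *\<^sub>R p"
      using xv(1) unfolding convex_cone_hull_convex_hull by auto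
    then have "fst p \<in> convex hull K" "snd p = 1"
      by (auto simp: convex_hull_Times mem_Times_iff)
    with p(2) \<open>snd x = 1\<close> have "x = (fst p, 1)"
      by (auto simp: prod_eq_iff)
    then have "v + fst p \<in> ?R" "w = (v + fst p, 1)"
      using xv(2,3) \<open>fst p \<in> convex hull K\<close> by (auto simp: add.commute)
    then show "w \<in> (\<lambda>x. (x, 1)) ` ?R"
      by blast
  next
    fix w :: "'a \<times> real" assume "w \<in> (\<lambda>x. (x, 1)) ` ?R"
    then obtain v k where vk: "v \<in> convex_cone hull G" "k \<in> convex hull K" "w = (k, 1) + (v, 0)"
      by auto
    have "(k, 1) \<in> convex_cone hull (K \<times> {1::real})"
      using vk(2) convex_hull_subset_convex_cone_hull by (force simp: convex_hull_Times)
    then have "w \<in> ?Q"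
      unfolding convex_cone_hull_Un ccG using vk by blast
    then show "w \<in> ?Q \<inter> ?H"
      using vk(3) by simp
  qed
qed

lemma polyhedron_convex_cone_hull_plus_convex_hull:
  fixes G K :: "'a::euclidean_space set"
  assumes "finite G" "finite K"
  shows "polyhedron (\<Union>v\<in>convex_cone hull G. \<Union>k\<in>convex hull K. {v + k})"
    (is "polyhedron ?R")
proof -
  define L where "L = (\<lambda>x::'a. (x, 0::real))"
  have linL: "linear L" and injL: "inj L"
    unfolding L_def by (auto simp: linear_iff inj_on_def)
  have lift: "(\<lambda>x. (x, 1)) ` S = (+) (0, 1) ` L ` S" for S
    unfolding L_def image_image by simp
  have "polyhedron ((+) (0, 1) ` L ` ?R)"
    unfolding lift[symmetric] convex_cone_hull_homogenization[symmetric] using assms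
    by (intro polyhedron_Int polyhedron_hyperplane polyhedron_convex_cone_hull) auto
  have "finite {F. F face_of ?R}"
  proof (rule finite_imageD)
    have "(\<lambda>F. (+) (0, 1) ` L ` F) ` {F. F face_of ?R} \<subseteq> {F. F face_of ((+) (0, 1) ` L ` ?R)}"
      using face_of_linear_image[OF linL injL] face_of_translation_eq by blast
    then show "finite ((\<lambda>F. (+) (0, 1) ` L ` F) ` {F. F face_of ?R})"
      using finite_polyhedron_faces[OF \<open>polyhedron ((+) (0, 1) ` L ` ?R)\<close>] finite_subset by blast
    show "inj_on (\<lambda>F. (+) (0, 1) ` L ` F) {F. F face_of ?R}"
      using injL by (auto simp: inj_on_def inj_image_eq_iff)
  qed
  moreover have "closed ?R"
    using assms by (intro closed_compact_sums closed_convex_cone_hull compact_convex_hull finite_imp_compact)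
  moreover have "convex ?R"
    by (intro convex_sums convex_convex_hull convex_convex_cone_hull)
  ultimately show ?thesis
    using polyhedron_eq_finite_faces by blast
qed

lemma eventually_shrink_in_halfspaces:
  fixes y :: "'a::real_inner"
  assumes "finite H" "\<And>h. h \<in> H \<Longrightarrow> h = {x. a h \<bullet> x \<le> b h}" "y \<in> \<Inter>H"
    and "\<And>h. h \<in> H \<Longrightarrow> a h \<bullet> y = b h \<Longrightarrow> 0 \<le> b h"
  shows "\<forall>\<^sub>F \<epsilon> in at_right 0. (1 - \<epsilon>) *\<^sub>R y \<in> \<Inter>H"
proof -
  have mem: "x \<in> h \<longleftrightarrow> a h \<bullet> x \<le> b h" if "h \<in> H" for h x
    by (subst assms(2)[OF that]) simp
  have ev: "\<forall>\<^sub>F \<epsilon> in at_right 0. a h \<bullet> ((1 - \<epsilon>) *\<^sub>R y) \<le> b h" if "h \<in> H" for h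
  proof (cases "a h \<bullet> y = b h")
    case True
    then have "a h \<bullet> ((1 - \<epsilon>) *\<^sub>R y) \<le> b h" if "0 < \<epsilon>" for \<epsilon> :: real
      using assms(4)[OF \<open>h \<in> H\<close>] that by (simp add: algebra_simps)
    then show ?thesis
      by (rule eventually_mono[OF eventually_at_right_less])
  next
    case False
    have "y \<in> h"
      using assms(3) that by blast
    then have "a h \<bullet> y < b h"
      using False mem[OF that] by simp
    moreover have "((\<lambda>\<epsilon>::real. a h \<bullet> ((1 - \<epsilon>) *\<^sub>R y)) \<longlongrightarrow> a h \<bullet> ((1 - 0) *\<^sub>R y)) (at_right 0)"
      by (intro tendsto_inner tendsto_const tendsto_scaleR tendsto_diff tendsto_ident_at)
    ultimately show ?thesis
      by (intro eventually_mono[OF order_tendstoD(2)]) auto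
  qed
  have "\<forall>\<^sub>F \<epsilon> in at_right 0. \<forall>h\<in>H. a h \<bullet> ((1 - \<epsilon>) *\<^sub>R y) \<le> b h"
    using ev by (intro eventually_ball_finite[OF assms(1)] ballI)
  then show ?thesis
  proof (rule eventually_mono)
    fix \<epsilon> :: real assume "\<forall>h\<in>H. a h \<bullet> ((1 - \<epsilon>) *\<^sub>R y) \<le> b h"
    then show "(1 - \<epsilon>) *\<^sub>R y \<in> \<Inter>H"
      using mem by blast
  qed
qed

section \<open>The polyhedron of nonzero lattice points of a pointed cone\<close>

locale pointed_lattice_cone =
  fixes \<sigma> G :: "(real^3) set"
  assumes finite_G: "finite G" and G_latN: "G \<subseteq> latN" and zero_notin_G: "0 \<notin> G"
    and cone_eq: "\<sigma> = convex_cone hull G"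
    and pointed: "\<sigma> \<inter> uminus ` \<sigma> \<subseteq> {0}"
begin

definition P :: "(real^3) set"
  where "P = convex hull (\<sigma> \<inter> (latN - {0}))"

lemma convex_cone_\<sigma>: "convex_cone \<sigma>"
  by (simp add: cone_eq convex_cone_convex_cone_hull)

lemma \<sigma>_add: "x \<in> \<sigma> \<Longrightarrow> y \<in> \<sigma> \<Longrightarrow> x + y \<in> \<sigma>"
  using convex_cone_\<sigma> by (rule convex_cone_add)

lemma \<sigma>_scaleR: "x \<in> \<sigma> \<Longrightarrow> 0 \<le> c \<Longrightarrow> c *\<^sub>R x \<in> \<sigma>"
  using convex_cone_\<sigma> by (simp add: convex_cone_scaleR)

lemma zero_in_\<sigma>: "0 \<in> \<sigma>"
  using convex_cone_\<sigma> by (rule convex_cone_contains_0)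

lemma G_subset_\<sigma>: "G \<subseteq> \<sigma>"
  by (simp add: cone_eq hull_subset)

lemma \<sigma>_add_eq_0: "x \<in> \<sigma> \<Longrightarrow> y \<in> \<sigma> \<Longrightarrow> x + y = 0 \<Longrightarrow> x = 0"
  using pointed by (force simp: add_eq_0_iff2)

lemma \<sigma>_eq_sums: "\<sigma> = {\<Sum>g\<in>G. c g *\<^sub>R g | c. \<forall>g\<in>G. 0 \<le> c g}"
  by (simp add: cone_eq convex_cone_hull_finite[OF finite_G])

lemma sum_minus_generator_in_\<sigma>:
  assumes "\<forall>h\<in>G. 0 \<le> c h" "g \<in> G" "t \<le> c g"
  shows "(\<Sum>h\<in>G. c h *\<^sub>R h) - t *\<^sub>R g \<in> \<sigma>"
proof -
  have "(\<Sum>h\<in>G. c h *\<^sub>R h) - t *\<^sub>R g = (\<Sum>h\<in>G. (c h - (if h = g then t else 0)) *\<^sub>R h)"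
    using sum_delta_scaleR[OF finite_G assms(2), of t] by (simp add: scaleR_diff_left sum_subtractf)
  then show ?thesis
    unfolding \<sigma>_eq_sums using assms by force
qed

lemma \<sigma>_cases:
  assumes "x \<in> \<sigma>"
  obtains g where "g \<in> G" "x - g \<in> \<sigma>"
  | c where "\<forall>g\<in>G. 0 \<le> c g \<and> c g \<le> 1" "x = (\<Sum>g\<in>G. c g *\<^sub>R g)"
proof -
  obtain c where c: "\<forall>g\<in>G. 0 \<le> c g" "x = (\<Sum>g\<in>G. c g *\<^sub>R g)"
    using assms unfolding \<sigma>_eq_sums by blast
  show ?thesis
  proof (cases "\<exists>g\<in>G. 1 \<le> c g")
    case True
    then obtain g where "g \<in> G" "1 \<le> c g"
      by blast
    then show ?thesis
      using that(1) sum_minus_generator_in_\<sigma>[OF c(1)] c(2) by fastforce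
  next
    case False
    then have "\<forall>g\<in>G. 0 \<le> c g \<and> c g \<le> 1"
      using c(1) by auto
    then show ?thesis
      using that(2) c(2) by blast
  qed
qed

lemma P_subset_\<sigma>: "P \<subseteq> \<sigma>"
  unfolding P_def by (rule hull_minimal) (auto simp: convex_cone_\<sigma>[unfolded convex_cone_def])

lemma convex_P: "convex P"
  by (simp add: P_def)

lemma lattice_point_in_P: "x \<in> \<sigma> \<Longrightarrow> x \<in> latN \<Longrightarrow> x \<noteq> 0 \<Longrightarrow> x \<in> P"
  unfolding P_def by (rule hull_inc) auto

lemma G_subset_P: "G \<subseteq> P"
  using G_subset_\<sigma> G_latN zero_notin_G lattice_point_in_P by blast

lemma zero_notin_P: "0 \<notin> P"
proof
  assume "0 \<in> P"
  then obtain S u where S: "finite S" "S \<subseteq> \<sigma> \<inter> (latN - {0})" "\<forall>x\<in>S. 0 \<le> u x"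
    "sum u S = 1" "(\<Sum>v\<in>S. u v *\<^sub>R v) = 0"
    unfolding P_def convex_hull_explicit by auto
  have "\<exists>v\<in>S. 0 < u v"
  proof (rule ccontr)
    assume "\<not> (\<exists>v\<in>S. 0 < u v)"
    then have "sum u S \<le> 0"
      by (simp add: sum_nonpos not_less)
    then show False
      using S(4) by simp
  qed
  then obtain v where v: "v \<in> S" "0 < u v"
    by blast
  have "u v *\<^sub>R v \<in> \<sigma>" "(\<Sum>w\<in>S - {v}. u w *\<^sub>R w) \<in> \<sigma>"
    using S(2,3) v by (auto intro!: \<sigma>_scaleR convex_cone_sum[OF convex_cone_\<sigma>])
  moreover have "u v *\<^sub>R v + (\<Sum>w\<in>S - {v}. u w *\<^sub>R w) = 0"
    using S(1,5) v(1) by (simp add: sum.remove)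
  ultimately have "u v *\<^sub>R v = 0"
    by (rule \<sigma>_add_eq_0)
  then show False
    using v S(2) by auto
qed

lemma P_plus_generator:
  assumes "p \<in> P" "g \<in> G" "0 \<le> c"
  shows "p + c *\<^sub>R g \<in> P"
proof -
  have step: "q + c *\<^sub>R g \<in> P" if q: "q \<in> \<sigma> \<inter> (latN - {0})" for q
  proof -
    have on_lattice: "q + of_int m *\<^sub>R g \<in> P" if "0 \<le> m" for m
    proof (rule lattice_point_in_P)
      show "q + of_int m *\<^sub>R g \<in> \<sigma>"
        using q that assms(2) G_subset_\<sigma> by (auto intro!: \<sigma>_add \<sigma>_scaleR)
      show "q + of_int m *\<^sub>R g \<in> latN"
        using q assms(2) G_latN by (auto intro!: latN_add latN_of_int_scaleR)
      show "q + of_int m *\<^sub>R g \<noteq> 0"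
        using q that assms(2) G_subset_\<sigma> \<sigma>_add_eq_0[of q "of_int m *\<^sub>R g"] \<sigma>_scaleR by auto
    qed
    define \<theta> where "\<theta> = c - of_int \<lfloor>c\<rfloor>"
    have "0 \<le> \<theta>" "\<theta> \<le> 1" "0 \<le> \<lfloor>c\<rfloor>"
      using assms(3) unfolding \<theta>_def by linarith+
    then have "(1 - \<theta>) *\<^sub>R (q + of_int \<lfloor>c\<rfloor> *\<^sub>R g) + \<theta> *\<^sub>R (q + of_int (\<lfloor>c\<rfloor> + 1) *\<^sub>R g) \<in> P"
      by (intro convexD[OF convex_P] on_lattice) auto
    moreover have "q + c *\<^sub>R g = (1 - \<theta>) *\<^sub>R (q + of_int \<lfloor>c\<rfloor> *\<^sub>R g) + \<theta> *\<^sub>R (q + of_int (\<lfloor>c\<rfloor> + 1) *\<^sub>R g)"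
      unfolding \<theta>_def by (simp add: algebra_simps)
    ultimately show ?thesis
      by argo
  qed
  have "(\<lambda>x. c *\<^sub>R g + x) ` P = convex hull ((\<lambda>x. c *\<^sub>R g + x) ` (\<sigma> \<inter> (latN - {0})))"
    unfolding P_def convex_hull_translation ..
  also have "\<dots> \<subseteq> P"
    using step by (intro hull_minimal) (auto simp: convex_P add.commute)
  finally show ?thesis
    using assms(1) by (auto simp: add.commute)
qed

lemma P_plus_\<sigma>:
  assumes "p \<in> P" "v \<in> \<sigma>"
  shows "p + v \<in> P"
proof -
  obtain c where c: "\<forall>g\<in>G. 0 \<le> c g" "v = (\<Sum>g\<in>G. c g *\<^sub>R g)"
    using assms(2) unfolding \<sigma>_eq_sums by blast
  have "\<forall>p\<in>P. p + (\<Sum>g\<in>H. c g *\<^sub>R g) \<in> P" if "H \<subseteq> G" for H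
    using finite_subset[OF that finite_G] that
  proof (induction H rule: finite_induct)
    case (insert g H)
    then show ?case
      using c(1) P_plus_generator by (simp add: add.assoc[symmetric])
  qed simp
  then show ?thesis
    using assms(1) c(2) by blast
qed

lemma scaleR_P:
  assumes "p \<in> P" "1 \<le> t"
  shows "t *\<^sub>R p \<in> P"
proof -
  have "(t - 1) *\<^sub>R p \<in> \<sigma>"
    using assms P_subset_\<sigma> \<sigma>_scaleR by auto
  then have "p + (t - 1) *\<^sub>R p \<in> P"
    using P_plus_\<sigma>[OF assms(1)] by blast
  then show ?thesis
    by (simp add: algebra_simps)
qed

lemma scaleR_notin_bounded_face:
  assumes "F face_of P" "bounded F" "y \<in> P" "y \<noteq> 0" "1 < t"
  shows "t *\<^sub>R y \<notin> F"
proof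
  assume "t *\<^sub>R y \<in> F"
  obtain B where B: "\<And>x. x \<in> F \<Longrightarrow> norm x \<le> B"
    using assms(2) bounded_iff by blast
  define T where "T = max (t + 1) ((\<bar>B\<bar> + 1) / norm y)"
  have T: "t < T" "(\<bar>B\<bar> + 1) / norm y \<le> T"
    unfolding T_def by auto
  have "t \<in> open_segment 1 T"
    using T(1) assms(5) by (simp add: open_segment_eq_real_ivl)
  then have "t *\<^sub>R y \<in> open_segment y (T *\<^sub>R y)"
    using open_segment_on_line[OF assms(4), of 0 1 T] by auto
  moreover have "T *\<^sub>R y \<in> P"
    using scaleR_P assms(3,5) T(1) by simp
  ultimately have "T *\<^sub>R y \<in> F"
    using face_ofD[OF assms(1)] \<open>t *\<^sub>R y \<in> F\<close> assms(3) by blast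
  then have "T * norm y \<le> B"
    using B[of "T *\<^sub>R y"] T(1) assms(5) by simp
  moreover have "\<bar>B\<bar> + 1 \<le> T * norm y"
    using T(2) assms(4) by (simp add: pos_divide_le_eq)
  ultimately show False
    by linarith
qed

lemma ray_meets_bounded_faces_once:
  assumes "F face_of P" "bounded F" "F' face_of P" "bounded F'"
    and "y \<in> F" "y' \<in> F'" "0 < t" "0 < t'" "t *\<^sub>R y = t' *\<^sub>R y'"
  shows "y = y'"
proof -
  have le: "s' \<le> s"
    if "F1 face_of P" "bounded F1" "z \<in> F1" "z' \<in> P" "0 < s" "s *\<^sub>R z = s' *\<^sub>R z'" for F1 z z' s s'
  proof (rule ccontr)
    assume "\<not> s' \<le> s"
    then have "1 < s' / s"
      using \<open>0 < s\<close> by simp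
    moreover have "z' \<noteq> 0"
      using that(4) zero_notin_P by auto
    ultimately have "(s' / s) *\<^sub>R z' \<notin> F1"
      using scaleR_notin_bounded_face[OF that(1,2,4)] by blast
    moreover have "(s' / s) *\<^sub>R z' = (1 / s) *\<^sub>R (s *\<^sub>R z)"
      using that(6) by (simp add: divide_inverse_commute)
    ultimately show False
      using that(3,5) by simp
  qed
  have "y \<in> P" "y' \<in> P"
    using assms(1,3,5,6) face_of_imp_subset by blast+
  then have "t = t'"
    using le[OF assms(1,2,5) \<open>y' \<in> P\<close> assms(7,9)] le[OF assms(3,4,6) \<open>y \<in> P\<close> assms(8) assms(9)[symmetric]]
    by simp
  then show ?thesis
    using assms(7,9) by simp
qed

lemma convex_cone_hull_Int_bounded_faces:
  assumes "F face_of P" "bounded F" "F' face_of P" "bounded F'"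
    and "convex s" "s \<subseteq> F" "convex s'" "s' \<subseteq> F'"
  shows "convex_cone hull s \<inter> convex_cone hull s' \<subseteq> convex_cone hull (s \<inter> s')"
proof
  fix x assume x: "x \<in> convex_cone hull s \<inter> convex_cone hull s'"
  show "x \<in> convex_cone hull (s \<inter> s')"
  proof (cases "x = 0")
    case False
    obtain y t where y: "y \<in> s" "0 \<le> t" "x = t *\<^sub>R y"
      using x False unfolding convex_cone_hull_of_convex[OF assms(5)] by blast
    obtain y' t' where y': "y' \<in> s'" "0 \<le> t'" "x = t' *\<^sub>R y'"
      using x False unfolding convex_cone_hull_of_convex[OF assms(7)] by blast
    have "t \<noteq> 0" "t' \<noteq> 0"
      using y(3) y'(3) False by auto
    then have "0 < t" "0 < t'"
      using y(2) y'(2) by auto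
    then have "y = y'"
      using ray_meets_bounded_faces_once[OF assms(1-4)] y y' assms(6,8) by blast
    then show ?thesis
      using y y' by (simp add: convex_cone_hull_mul hull_inc)
  qed (simp add: convex_cone_hull_contains_0)
qed

definition K :: "(real^3) set"
  where "K = {x \<in> latN - {0}. \<exists>c. (\<forall>g\<in>G. 0 \<le> c g \<and> c g \<le> 1) \<and> x = (\<Sum>g\<in>G. c g *\<^sub>R g)}"

lemma finite_K: "finite K"
proof -
  have "K \<subseteq> cball 0 (\<Sum>g\<in>G. norm g) \<inter> latN"
  proof
    fix x assume "x \<in> K"
    then obtain c where c: "x \<in> latN" "\<forall>g\<in>G. 0 \<le> c g \<and> c g \<le> 1" "x = (\<Sum>g\<in>G. c g *\<^sub>R g)"
      unfolding K_def by auto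
    have "norm x \<le> (\<Sum>g\<in>G. norm (c g *\<^sub>R g))"
      unfolding c(3) by (rule norm_sum)
    also have "\<dots> \<le> (\<Sum>g\<in>G. norm g)"
      using c(2) by (intro sum_mono) (auto simp: mult_left_le_one_le)
    finally show "x \<in> cball 0 (\<Sum>g\<in>G. norm g) \<inter> latN"
      using c(1) by auto
  qed
  then show ?thesis
    using finite_Int_latN[of "cball 0 _"] finite_subset by blast
qed

lemma K_subset_P: "K \<subseteq> P"
  unfolding K_def \<sigma>_eq_sums using lattice_point_in_P[unfolded \<sigma>_eq_sums] by force

lemma P_eq_sums: "P = (\<Union>v\<in>\<sigma>. \<Union>k\<in>convex hull K. {v + k})"
proof
  have "convex hull K \<subseteq> P"
    using K_subset_P convex_P by (rule hull_minimal)
  then show "(\<Union>v\<in>\<sigma>. \<Union>k\<in>convex hull K. {v + k}) \<subseteq> P"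
    using P_plus_\<sigma> by (force simp: add.commute)
  have "x \<in> (\<Union>v\<in>\<sigma>. \<Union>k\<in>convex hull K. {v + k})" if x: "x \<in> \<sigma>" "x \<in> latN" "x \<noteq> 0" for x
    using x(1)
  proof (cases rule: \<sigma>_cases)
    case (1 g)
    have "g = (\<Sum>h\<in>G. (if h = g then 1 else 0) *\<^sub>R h)"
      using sum_delta_scaleR[OF finite_G 1(1), of 1] by simp
    then have "g \<in> K"
      using 1(1) G_latN zero_notin_G unfolding K_def
      by (intro CollectI conjI exI[of _ "\<lambda>h. if h = g then 1 else 0"]) auto
    then have "x = (x - g) + g" "x - g \<in> \<sigma>" "g \<in> convex hull K"
      using 1(2) by (auto intro: hull_inc)
    then show ?thesis
      by blast
  next
    case (2 c)
    then have "x \<in> convex hull K"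
      unfolding K_def using x by (blast intro: hull_inc)
    then show ?thesis
      using zero_in_\<sigma> by force
  qed
  then have "\<sigma> \<inter> (latN - {0}) \<subseteq> (\<Union>v\<in>\<sigma>. \<Union>k\<in>convex hull K. {v + k})"
    by blast
  moreover have "convex (\<Union>v\<in>\<sigma>. \<Union>k\<in>convex hull K. {v + k})"
    using convex_cone_\<sigma> by (intro convex_sums convex_convex_hull) (simp add: convex_cone_def)
  ultimately show "P \<subseteq> (\<Union>v\<in>\<sigma>. \<Union>k\<in>convex hull K. {v + k})"
    unfolding P_def by (rule hull_minimal)
qed

lemma polyhedron_P: "polyhedron P"
proof -
  have "(\<Union>v\<in>\<sigma>. \<Union>k\<in>convex hull K. {v + k}) = (\<Union>v\<in>convex_cone hull G. \<Union>k\<in>convex hull K. {v + k})"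
    by (simp only: cone_eq)
  then show ?thesis
    unfolding P_eq_sums using polyhedron_convex_cone_hull_plus_convex_hull[OF finite_G finite_K] by simp
qed

lemma ray_meets_P:
  assumes "x \<in> \<sigma>" "x \<noteq> 0"
  obtains t where "0 < t" "t *\<^sub>R x \<in> P"
proof -
  obtain c where c: "\<forall>g\<in>G. 0 \<le> c g" "x = (\<Sum>g\<in>G. c g *\<^sub>R g)"
    using assms(1) unfolding \<sigma>_eq_sums by blast
  have "\<exists>g\<in>G. 0 < c g"
  proof (rule ccontr)
    assume "\<not> (\<exists>g\<in>G. 0 < c g)"
    then have "\<forall>g\<in>G. c g = 0"
      using c(1) by force
    then show False
      using c(2) assms(2) by simp
  qed
  then obtain g where g: "g \<in> G" "0 < c g"
    by blast
  define t where "t = 1 / c g"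
  have "t *\<^sub>R x - 1 *\<^sub>R g \<in> \<sigma>"
    using sum_minus_generator_in_\<sigma>[of "\<lambda>h. t * c h" g 1] c g
    unfolding t_def by (simp add: scaleR_sum_right)
  moreover have "g \<in> P"
    using G_subset_P g(1) by blast
  ultimately have "g + (t *\<^sub>R x - g) \<in> P"
    by (simp only: scaleR_one P_plus_\<sigma>)
  then have "t *\<^sub>R x \<in> P"
    by simp
  moreover have "0 < t"
    using g(2) unfolding t_def by simp
  ultimately show ?thesis
    using that by simp
qed

lemma first_point_on_ray:
  assumes "x \<in> \<sigma>" "x \<noteq> 0"
  obtains t where "0 < t" "t *\<^sub>R x \<in> P" "\<And>s. 0 \<le> s \<Longrightarrow> s < t \<Longrightarrow> s *\<^sub>R x \<notin> P"
proof -
  define I where "I = {t. 0 \<le> t \<and> t *\<^sub>R x \<in> P}"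
  have "I = {0..} \<inter> (\<lambda>t. t *\<^sub>R x) -` P"
    unfolding I_def by auto
  moreover have "closed ((\<lambda>t. t *\<^sub>R x) -` P)"
    using polyhedron_imp_closed[OF polyhedron_P] by (intro continuous_closed_vimage continuous_intros)
  ultimately have "closed I"
    by (simp add: closed_Int)
  moreover obtain t1 where "0 < t1" "t1 *\<^sub>R x \<in> P"
    using ray_meets_P assms by blast
  then have "I \<noteq> {}"
    unfolding I_def by (auto intro!: exI[of _ t1])
  moreover have "bdd_below I"
    unfolding I_def by (rule bdd_belowI[of _ 0]) auto
  ultimately have "Inf I \<in> I" "\<And>s. s \<in> I \<Longrightarrow> Inf I \<le> s"
    using closed_contains_Inf cInf_lower by blast+
  moreover have "Inf I \<noteq> 0"
    using \<open>Inf I \<in> I\<close> zero_notin_P unfolding I_def by auto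
  ultimately show ?thesis
    using that[of "Inf I"] unfolding I_def by force
qed

lemma P_Int_negative_supporting_hyperplane:
  assumes "\<forall>z\<in>P. a \<bullet> z \<le> b" "b < 0"
  shows "P \<inter> {z. a \<bullet> z = b} \<subseteq> convex hull K"
proof
  fix z assume z: "z \<in> P \<inter> {z. a \<bullet> z = b}"
  then obtain v k where vk: "v \<in> \<sigma>" "k \<in> convex hull K" "z = v + k"
    unfolding P_eq_sums by blast
  obtain c where c: "\<forall>g\<in>G. 0 \<le> c g" "v = (\<Sum>g\<in>G. c g *\<^sub>R g)"
    using vk(1) unfolding \<sigma>_eq_sums by blast
  have "convex hull K \<subseteq> P"
    using K_subset_P convex_P by (rule hull_minimal)
  then have "a \<bullet> k \<le> b"
    using assms(1) vk(2) by blast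
  then have "0 \<le> a \<bullet> v"
    using z vk(3) by (simp add: inner_add_right)
  have neg: "a \<bullet> g < 0" if "g \<in> G" for g
    using assms G_subset_P that by fastforce
  then have terms: "0 \<le> - (c g * (a \<bullet> g))" if "g \<in> G" for g
    using c(1) that by (simp add: mult_nonneg_nonpos less_imp_le)
  then have "0 \<le> (\<Sum>g\<in>G. - (c g * (a \<bullet> g)))"
    by (rule sum_nonneg)
  moreover have "(\<Sum>g\<in>G. - (c g * (a \<bullet> g))) = - (a \<bullet> v)"
    unfolding c(2) by (simp add: inner_sum_right sum_negf)
  ultimately have "(\<Sum>g\<in>G. - (c g * (a \<bullet> g))) = 0"
    using \<open>0 \<le> a \<bullet> v\<close> by linarith
  then have "\<forall>g\<in>G. - (c g * (a \<bullet> g)) = 0"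
    using sum_nonneg_eq_0_iff[OF finite_G, of "\<lambda>g. - (c g * (a \<bullet> g))"] terms by blast
  then have "\<forall>g\<in>G. c g = 0"
    using neg by fastforce
  then show "z \<in> convex hull K"
    using c(2) vk(2,3) by simp
qed

lemma compact_P_Int_negative_supporting_hyperplane:
  assumes "\<forall>z\<in>P. a \<bullet> z \<le> b" "b < 0"
  shows "compact (P \<inter> {z. a \<bullet> z = b})"
  unfolding compact_eq_bounded_closed
proof
  show "bounded (P \<inter> {z. a \<bullet> z = b})"
    using P_Int_negative_supporting_hyperplane[OF assms]
      compact_imp_bounded[OF compact_convex_hull[OF finite_imp_compact[OF finite_K]]]
    by (rule bounded_subset[rotated])
  show "closed (P \<inter> {z. a \<bullet> z = b})"
    by (intro closed_Int closed_hyperplane polyhedron_imp_closed[OF polyhedron_P])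
qed

lemma first_point_on_negative_facet_hyperplane:
  assumes H: "finite H" "P = affine hull P \<inter> \<Inter>H" "\<And>h. h \<in> H \<Longrightarrow> h = {x. a h \<bullet> x \<le> b h}"
    and y: "y \<in> P" "\<And>\<epsilon>. 0 < \<epsilon> \<Longrightarrow> \<epsilon> < 1 \<Longrightarrow> (1 - \<epsilon>) *\<^sub>R y \<notin> P"
  shows "\<exists>h\<in>H. a h \<bullet> y = b h \<and> b h < 0"
proof (rule ccontr)
  assume "\<not> (\<exists>h\<in>H. a h \<bullet> y = b h \<and> b h < 0)"
  then have nonneg: "\<And>h. h \<in> H \<Longrightarrow> a h \<bullet> y = b h \<Longrightarrow> 0 \<le> b h"
    by (simp add: not_less)
  have "y \<in> \<Inter>H"
    using H(2) y(1) by blast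
  then have "\<forall>\<^sub>F \<epsilon> in at_right 0. (1 - \<epsilon>) *\<^sub>R y \<in> \<Inter>H"
    using eventually_shrink_in_halfspaces[OF H(1,3) _ nonneg] by blast
  moreover have "\<forall>\<^sub>F \<epsilon> in at_right (0::real). 0 < \<epsilon> \<and> \<epsilon> < 1"
    by (rule eventually_at_rightI[of 0 1]) auto
  ultimately have ev: "\<forall>\<^sub>F \<epsilon> in at_right 0. (0 < \<epsilon> \<and> \<epsilon> < 1) \<and> (1 - \<epsilon>) *\<^sub>R y \<in> \<Inter>H"
    by (rule eventually_conj[rotated])
  obtain \<epsilon> where \<epsilon>: "0 < \<epsilon>" "\<epsilon> < 1" "(1 - \<epsilon>) *\<^sub>R y \<in> \<Inter>H"
    using eventually_happens[OF ev] by auto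
  have "(2::real) *\<^sub>R y + (-1) *\<^sub>R (2 *\<^sub>R y) \<in> affine hull P"
    using y(1) scaleR_P[of y 2] by (intro mem_affine[OF affine_affine_hull] hull_inc) auto
  then have "0 \<in> affine hull P"
    by simp
  then have "(1 - \<epsilon>) *\<^sub>R y + \<epsilon> *\<^sub>R 0 \<in> affine hull P"
    using y(1) by (intro mem_affine[OF affine_affine_hull]) (auto intro: hull_inc)
  then have "(1 - \<epsilon>) *\<^sub>R y \<in> P"
    using H(2) \<epsilon>(3) by auto
  then show False
    using y(2) \<epsilon>(1,2) by blast
qed

lemma ray_meets_compact_facet:
  assumes "x \<in> \<sigma>" "x \<noteq> 0"
  obtains C t where "C facet_of P" "compact C" "0 < t" "t *\<^sub>R x \<in> C"
proof -
  obtain t where t: "0 < t" "t *\<^sub>R x \<in> P" "\<And>s. 0 \<le> s \<Longrightarrow> s < t \<Longrightarrow> s *\<^sub>R x \<notin> P"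
    using first_point_on_ray assms by blast
  have before: "(1 - \<epsilon>) *\<^sub>R (t *\<^sub>R x) \<notin> P" if "0 < \<epsilon>" "\<epsilon> < 1" for \<epsilon>
    using t(1) t(3)[of "(1 - \<epsilon>) * t"] that by simp
  obtain H where H: "finite H" "P = affine hull P \<inter> \<Inter>H"
    "\<forall>h\<in>H. \<exists>a b. a \<noteq> 0 \<and> h = {x. a \<bullet> x \<le> b}" "\<And>H'. H' \<subset> H \<Longrightarrow> P \<subset> affine hull P \<inter> \<Inter>H'"
    using polyhedron_P unfolding polyhedron_Int_affine_minimal by metis
  then obtain a b where ab: "\<And>h. h \<in> H \<Longrightarrow> a h \<noteq> 0 \<and> h = {x. a h \<bullet> x \<le> b h}"
    by metis
  then have "\<And>h. h \<in> H \<Longrightarrow> h = {x. a h \<bullet> x \<le> b h}"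
    by blast
  then obtain h where h: "h \<in> H" "a h \<bullet> (t *\<^sub>R x) = b h" "b h < 0"
    using first_point_on_negative_facet_hyperplane[OF H(1,2) _ t(2) before] by blast
  have "P \<inter> {z. a h \<bullet> z = b h} facet_of P"
    using facet_of_polyhedron_explicit[OF H(1,2) ab H(4)] h(1) by blast
  moreover have "\<forall>z\<in>P. a h \<bullet> z \<le> b h"
    using H(2) ab[OF h(1)] h(1) by blast
  then have "compact (P \<inter> {z. a h \<bullet> z = b h})"
    using compact_P_Int_negative_supporting_hyperplane h(3) by blast
  moreover have "t *\<^sub>R x \<in> P \<inter> {z. a h \<bullet> z = b h}"
    using t(2) h(2) by simp
  ultimately show ?thesis
    using that t(1) by blast
qed

lemma Hlb_scaleR_notin_latN:
  assumes "x \<in> Hlb \<sigma>" "0 < t" "t < 1"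
  shows "t *\<^sub>R x \<notin> latN"
proof
  assume "t *\<^sub>R x \<in> latN"
  have x: "x \<in> \<sigma>" "x \<in> latN" "x \<noteq> 0"
    using assms(1) unfolding Hlb_def by auto
  have "(1 - t) *\<^sub>R x = x - t *\<^sub>R x"
    by (simp add: algebra_simps)
  then have "(1 - t) *\<^sub>R x \<in> latN"
    using latN_diff[OF x(2) \<open>t *\<^sub>R x \<in> latN\<close>] by simp
  moreover have "t *\<^sub>R x \<in> \<sigma>" "(1 - t) *\<^sub>R x \<in> \<sigma>"
    using x(1) assms(2,3) \<sigma>_scaleR by simp_all
  moreover have "t *\<^sub>R x \<noteq> 0" "(1 - t) *\<^sub>R x \<noteq> 0"
    using x(3) assms(2,3) by simp_all
  ultimately have "t *\<^sub>R x \<in> \<sigma> \<inter> latN - {0}" "(1 - t) *\<^sub>R x \<in> \<sigma> \<inter> latN - {0}"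
    using \<open>t *\<^sub>R x \<in> latN\<close> by simp_all
  moreover have "x = t *\<^sub>R x + (1 - t) *\<^sub>R x"
    by (simp add: algebra_simps)
  ultimately show False
    using assms(1) unfolding Hlb_def by blast
qed

lemma Hlb_subset_G_Un_K: "Hlb \<sigma> \<subseteq> G \<union> K"
proof
  fix x assume x: "x \<in> Hlb \<sigma>"
  then have "x \<in> \<sigma>" "x \<in> latN" "x \<noteq> 0"
    unfolding Hlb_def by auto
  from \<open>x \<in> \<sigma>\<close> show "x \<in> G \<union> K"
  proof (cases rule: \<sigma>_cases)
    case (1 g)
    have "g \<in> \<sigma> \<inter> latN - {0}"
      using 1(1) G_subset_\<sigma> G_latN zero_notin_G by auto
    moreover have "x - g \<in> \<sigma> \<inter> latN"
      using 1(2) \<open>x \<in> latN\<close> G_latN 1(1) by (auto intro: latN_diff)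
    moreover have "x = g + (x - g)"
      by simp
    ultimately have "x - g = 0"
      using x unfolding Hlb_def by blast
    then show ?thesis
      using 1(1) by simp
  next
    case (2 c)
    then show ?thesis
      unfolding K_def using \<open>x \<in> latN\<close> \<open>x \<noteq> 0\<close> by blast
  qed
qed

lemma finite_Hlb: "finite (Hlb \<sigma>)"
  using Hlb_subset_G_Un_K finite_G finite_K finite_subset by blast

lemma primitive_multiple_of_Hlb:
  assumes "a \<in> Hlb \<sigma>" "primitive v" "v = \<alpha> *\<^sub>R a" "0 < \<alpha>"
  shows "v = a"
proof -
  have "\<not> \<alpha> < 1"
    using Hlb_scaleR_notin_latN[OF assms(1,4)] assms(2,3) unfolding primitive_def by blast
  moreover have "\<not> 1 < \<alpha>"
  proof
    assume "1 < \<alpha>"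
    then have "(1 / \<alpha>) *\<^sub>R v \<notin> latN"
      using assms(2) unfolding primitive_def by simp
    then show False
      using assms(1,3,4) unfolding Hlb_def by simp
  qed
  ultimately show ?thesis
    using assms(3) by simp
qed

lemma zero_notin_affine_hull_bounded_face:
  assumes "F face_of P" "bounded F"
  shows "0 \<notin> affine hull F"
proof
  assume "0 \<in> affine hull F"
  then have "F \<noteq> {}"
    by auto
  then obtain y where y: "y \<in> rel_interior F"
    using rel_interior_eq_empty face_of_imp_convex[OF assms(1)] by blast
  then obtain e where e: "0 < e" "ball y e \<inter> affine hull F \<subseteq> F"
    using mem_rel_interior_ball by blast
  have "y \<in> P" "y \<noteq> 0"
    using y rel_interior_subset face_of_imp_subset[OF assms(1)] zero_notin_P by blast+
  define \<epsilon> where "\<epsilon> = e / (2 * norm y)"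
  have "0 < \<epsilon>" "\<epsilon> * norm y < e"
    using e(1) \<open>y \<noteq> 0\<close> unfolding \<epsilon>_def by auto
  have "(1 + \<epsilon>) *\<^sub>R y + (- \<epsilon>) *\<^sub>R 0 \<in> affine hull F"
    using y rel_interior_subset \<open>0 \<in> affine hull F\<close>
    by (intro mem_affine[OF affine_affine_hull]) (auto intro: hull_inc)
  moreover have "(1 + \<epsilon>) *\<^sub>R y \<in> ball y e"
    using \<open>\<epsilon> * norm y < e\<close> \<open>0 < \<epsilon>\<close> by (simp add: dist_norm algebra_simps)
  ultimately have "(1 + \<epsilon>) *\<^sub>R y \<in> F"
    using e(2) by auto
  then show False
    using scaleR_notin_bounded_face[OF assms \<open>y \<in> P\<close> \<open>y \<noteq> 0\<close>] \<open>0 < \<epsilon>\<close> by simp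
qed

end

section \<open>Elementary triangles on bounded faces\<close>

locale elementary_triangle_on_bounded_face = pointed_lattice_cone +
  fixes a b c :: "real^3" and F :: "(real^3) set"
  assumes distinct_vertices: "a \<noteq> b" "a \<noteq> c" "b \<noteq> c"
    and affine_independent: "\<not> affine_dependent {a, b, c}"
    and lattice_free: "convex hull {a, b, c} \<inter> latN = {a, b, c}"
    and triangle_subset_face: "convex hull {a, b, c} \<subseteq> F"
    and face: "F face_of P"
    and bounded_face: "bounded F"
begin

lemma vertices_latN: "a \<in> latN" "b \<in> latN" "c \<in> latN"
  using lattice_free by blast+

lemma triangle_subset_P: "convex hull {a, b, c} \<subseteq> P"
  using triangle_subset_face face_of_imp_subset[OF face] by blast

lemma vertices_P: "a \<in> P" "b \<in> P" "c \<in> P"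
proof -
  have "{a, b, c} \<subseteq> convex hull {a, b, c}"
    by (rule hull_subset)
  then show "a \<in> P" "b \<in> P" "c \<in> P"
    using triangle_subset_P by blast+
qed

lemma vertices_\<sigma>: "a \<in> \<sigma>" "b \<in> \<sigma>" "c \<in> \<sigma>"
  using vertices_P P_subset_\<sigma> by blast+

lemma in_triangle:
  "0 \<le> \<alpha> \<Longrightarrow> 0 \<le> \<beta> \<Longrightarrow> 0 \<le> \<gamma> \<Longrightarrow> \<alpha> + \<beta> + \<gamma> = 1 \<Longrightarrow>
    \<alpha> *\<^sub>R a + \<beta> *\<^sub>R b + \<gamma> *\<^sub>R c \<in> convex hull {a, b, c}"
  unfolding convex_hull_3 by blast

lemma cone_point_in_\<sigma>:
  "0 \<le> \<alpha> \<Longrightarrow> 0 \<le> \<beta> \<Longrightarrow> 0 \<le> \<gamma> \<Longrightarrow> \<alpha> *\<^sub>R a + \<beta> *\<^sub>R b + \<gamma> *\<^sub>R c \<in> \<sigma>"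
  using vertices_\<sigma> by (intro \<sigma>_add \<sigma>_scaleR) auto

lemma independent_vertices: "independent {a, b, c}"
proof -
  have "{a, b, c} \<subseteq> F"
    using hull_subset[of "{a, b, c}" convex] triangle_subset_face by (rule order_trans)
  then have "affine hull {a, b, c} \<subseteq> affine hull F"
    by (rule hull_mono)
  then have "0 \<notin> affine hull {a, b, c}"
    using zero_notin_affine_hull_bounded_face[OF face bounded_face] by blast
  then have "\<not> affine_dependent (insert 0 {a, b, c})" "0 \<notin> {a, b, c}"
    using affine_independent_insert[OF affine_independent] hull_inc[of _ "{a, b, c}" affine] by blast+
  then have "independent {x - 0 | x. x \<in> {a, b, c}}"
    using dependent_imp_affine_dependent[of 0 "{a, b, c}"] by blast
  moreover have "{x - 0 | x. x \<in> {a, b, c}} = {a, b, c}"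
    by auto
  ultimately show ?thesis
    by simp
qed

lemma coeffs_eq:
  "\<alpha> *\<^sub>R a + \<beta> *\<^sub>R b + \<gamma> *\<^sub>R c = \<alpha>' *\<^sub>R a + \<beta>' *\<^sub>R b + \<gamma>' *\<^sub>R c \<Longrightarrow> \<alpha> = \<alpha>' \<and> \<beta> = \<beta>' \<and> \<gamma> = \<gamma>'"
  using independent_3_coeffs_eq[OF independent_vertices distinct_vertices] .

lemma vertex_coeffs:
  assumes "\<alpha> *\<^sub>R a + \<beta> *\<^sub>R b + \<gamma> *\<^sub>R c \<in> {a, b, c}"
  shows "\<alpha> = 1 \<or> \<beta> = 1 \<or> \<gamma> = 1"
proof -
  have units: "a = 1 *\<^sub>R a + 0 *\<^sub>R b + 0 *\<^sub>R c" "b = 0 *\<^sub>R a + 1 *\<^sub>R b + 0 *\<^sub>R c"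
    "c = 0 *\<^sub>R a + 0 *\<^sub>R b + 1 *\<^sub>R c"
    by simp_all
  from assms consider (a) "\<alpha> *\<^sub>R a + \<beta> *\<^sub>R b + \<gamma> *\<^sub>R c = a" | (b) "\<alpha> *\<^sub>R a + \<beta> *\<^sub>R b + \<gamma> *\<^sub>R c = b"
    | (c) "\<alpha> *\<^sub>R a + \<beta> *\<^sub>R b + \<gamma> *\<^sub>R c = c"
    by blast
  then show ?thesis
  proof cases
    case a
    show ?thesis
      using coeffs_eq[OF trans[OF a units(1)]] by simp
  next
    case b
    show ?thesis
      using coeffs_eq[OF trans[OF b units(2)]] by simp
  next
    case c
    show ?thesis
      using coeffs_eq[OF trans[OF c units(3)]] by simp
  qed
qed

lemma coeff_sum_ge_1:
  assumes "w \<in> P" "w = \<alpha> *\<^sub>R a + \<beta> *\<^sub>R b + \<gamma> *\<^sub>R c" "0 \<le> \<alpha>" "0 \<le> \<beta>" "0 \<le> \<gamma>"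
  shows "1 \<le> \<alpha> + \<beta> + \<gamma>"
proof (rule ccontr)
  define m where "m = \<alpha> + \<beta> + \<gamma>"
  assume "\<not> 1 \<le> \<alpha> + \<beta> + \<gamma>"
  then have "m < 1"
    unfolding m_def by simp
  have "w \<noteq> 0"
    using assms(1) zero_notin_P by auto
  then have "0 < m"
    using assms(2-5) unfolding m_def by (cases "\<alpha> = 0 \<and> \<beta> = 0 \<and> \<gamma> = 0") auto
  have "(1 / m) *\<^sub>R w = (\<alpha> / m) *\<^sub>R a + (\<beta> / m) *\<^sub>R b + (\<gamma> / m) *\<^sub>R c"
    using assms(2) by (simp add: algebra_simps)
  also have "\<dots> \<in> F"
    using in_triangle \<open>0 < m\<close> assms(3-5) triangle_subset_face
    unfolding m_def by (auto simp flip: add_divide_distrib)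
  finally show False
    using scaleR_notin_bounded_face[OF face bounded_face assms(1) \<open>w \<noteq> 0\<close>] \<open>0 < m\<close> \<open>m < 1\<close> by simp
qed

lemma cone_point_notin_bounded_face:
  assumes "F' face_of P" "bounded F'"
    and "x = \<alpha> *\<^sub>R a + \<beta> *\<^sub>R b + \<gamma> *\<^sub>R c" "0 \<le> \<alpha>" "0 \<le> \<beta>" "0 \<le> \<gamma>" "1 < \<alpha> + \<beta> + \<gamma>"
  shows "x \<notin> F'"
proof
  assume "x \<in> F'"
  define m where "m = \<alpha> + \<beta> + \<gamma>"
  have "1 < m"
    using assms(7) unfolding m_def .
  have "(1 / m) *\<^sub>R x = (\<alpha> / m) *\<^sub>R a + (\<beta> / m) *\<^sub>R b + (\<gamma> / m) *\<^sub>R c"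
    using assms(3) by (simp add: algebra_simps)
  also have "\<dots> \<in> P"
    using in_triangle \<open>1 < m\<close> assms(4-6) triangle_subset_P
    unfolding m_def by (auto simp flip: add_divide_distrib)
  finally have "(1 / m) *\<^sub>R x \<in> P" .
  moreover have "(1 / m) *\<^sub>R x \<noteq> 0"
    using calculation zero_notin_P by auto
  moreover have "m *\<^sub>R ((1 / m) *\<^sub>R x) = x"
    using \<open>1 < m\<close> by simp
  ultimately show False
    using scaleR_notin_bounded_face[OF assms(1,2)] \<open>1 < m\<close> \<open>x \<in> F'\<close> by metis
qed

lemma small_lattice_point_in_Hlb:
  assumes "x \<in> latN" "x \<noteq> 0"
    and "x = \<alpha> *\<^sub>R a + \<beta> *\<^sub>R b + \<gamma> *\<^sub>R c" "0 \<le> \<alpha>" "0 \<le> \<beta>" "0 \<le> \<gamma>" "\<alpha> + \<beta> + \<gamma> < 2"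
  shows "x \<in> Hlb \<sigma>"
proof -
  have "x \<in> \<sigma>"
    using assms(3-6) cone_point_in_\<sigma> by simp
  moreover have "\<not> (\<exists>p\<in>\<sigma> \<inter> latN - {0}. \<exists>q\<in>\<sigma> \<inter> latN - {0}. x = p + q)"
  proof
    assume "\<exists>p\<in>\<sigma> \<inter> latN - {0}. \<exists>q\<in>\<sigma> \<inter> latN - {0}. x = p + q"
    then obtain p q where "p \<in> P" "q \<in> P" "x = p + q"
      using lattice_point_in_P by blast
    then have "(1/2) *\<^sub>R p + (1/2) *\<^sub>R q \<in> P"
      using convexD[OF convex_P] by simp
    moreover have "(1/2) *\<^sub>R p + (1/2) *\<^sub>R q = (1/2) *\<^sub>R x"
      using \<open>x = p + q\<close> by (simp add: scaleR_add_right)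
    then have "(1/2) *\<^sub>R p + (1/2) *\<^sub>R q = (\<alpha>/2) *\<^sub>R a + (\<beta>/2) *\<^sub>R b + (\<gamma>/2) *\<^sub>R c"
      using assms(3) by (simp add: scaleR_add_right)
    ultimately have "1 \<le> \<alpha>/2 + \<beta>/2 + \<gamma>/2"
      using coeff_sum_ge_1 assms(4-6) by simp
    then show False
      using assms(7) by simp
  qed
  ultimately show ?thesis
    using assms(1,2) unfolding Hlb_def by blast
qed

lemma lattice_point_in_half_open_parallelepiped:
  assumes Hlb_on_bounded_faces: "Hlb \<sigma> \<subseteq> \<Union>{F'. F' face_of P \<and> bounded F'}"
    and "x \<in> latN" "x = \<alpha> *\<^sub>R a + \<beta> *\<^sub>R b + \<gamma> *\<^sub>R c"
    and "0 \<le> \<alpha>" "\<alpha> < 1" "0 \<le> \<beta>" "\<beta> < 1" "0 \<le> \<gamma>" "\<gamma> < 1"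
  shows "x = 0"
proof (rule ccontr)
  assume "x \<noteq> 0"
  define x' where "x' = a + b + c - x"
  have x': "x' = (1 - \<alpha>) *\<^sub>R a + (1 - \<beta>) *\<^sub>R b + (1 - \<gamma>) *\<^sub>R c"
    unfolding x'_def assms(3) by (simp add: algebra_simps)
  have "x' \<in> latN"
    unfolding x'_def using vertices_latN assms(2) by (intro latN_diff latN_add)
  have "x' \<noteq> 0"
    using coeffs_eq[of "1 - \<alpha>" "1 - \<beta>" "1 - \<gamma>" 0 0 0] x' assms(5) by auto
  have "x \<in> P" "x' \<in> P"
    using assms(2-9) x' \<open>x' \<in> latN\<close> \<open>x \<noteq> 0\<close> \<open>x' \<noteq> 0\<close>
    by (auto intro!: lattice_point_in_P cone_point_in_\<sigma>)
  then have "1 \<le> \<alpha> + \<beta> + \<gamma>" "1 \<le> (1 - \<alpha>) + (1 - \<beta>) + (1 - \<gamma>)"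
    using coeff_sum_ge_1[OF \<open>x \<in> P\<close> assms(3)] coeff_sum_ge_1[OF \<open>x' \<in> P\<close> x'] assms(4-9) by simp_all
  then consider "\<alpha> + \<beta> + \<gamma> = 1" | "(1 - \<alpha>) + (1 - \<beta>) + (1 - \<gamma>) = 1" | "1 < \<alpha> + \<beta> + \<gamma>" "\<alpha> + \<beta> + \<gamma> < 2"
    by linarith
  then show False
  proof cases
    case 1
    then have "x \<in> {a, b, c}"
      using in_triangle assms(2-9) lattice_free by blast
    then have "\<alpha> = 1 \<or> \<beta> = 1 \<or> \<gamma> = 1"
      using vertex_coeffs assms(3) by simp
    then show False
      using assms(5,7,9) by auto
  next
    case 2
    then have "x' \<in> {a, b, c}"
      using in_triangle[of "1 - \<alpha>" "1 - \<beta>" "1 - \<gamma>"] assms(5,7,9) x' \<open>x' \<in> latN\<close> lattice_free by auto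
    then have "1 - \<alpha> = 1 \<or> 1 - \<beta> = 1 \<or> 1 - \<gamma> = 1"
      using vertex_coeffs[of "1 - \<alpha>" "1 - \<beta>" "1 - \<gamma>"] unfolding x' by blast
    then show False
      using 2 assms(5,7,9) by auto
  next
    case 3
    then have "x \<in> Hlb \<sigma>"
      using small_lattice_point_in_Hlb assms(2-9) \<open>x \<noteq> 0\<close> by blast
    then obtain F' where "F' face_of P" "bounded F'" "x \<in> F'"
      using Hlb_on_bounded_faces by blast
    then show False
      using cone_point_notin_bounded_face assms(3,4,6,8) 3(1) by blast
  qed
qed

lemma Z_basis_vertices:
  assumes "Hlb \<sigma> \<subseteq> \<Union>{F'. F' face_of P \<and> bounded F'}"
  shows "Z_basis {a, b, c}"
  unfolding Z_basis_def
proof (intro conjI ballI)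
  show "{a, b, c} \<subseteq> latN"
    using vertices_latN by blast
  show "independent {a, b, c}"
    by (rule independent_vertices)
  fix x assume "x \<in> latN"
  have "card {a, b, c} = dim (UNIV :: (real^3) set)"
    using distinct_vertices by simp
  then have "UNIV \<subseteq> span {a, b, c}"
    using card_eq_dim[of "{a, b, c}" UNIV] independent_vertices by simp
  then have "x \<in> range (\<lambda>u. \<Sum>v\<in>{a, b, c}. u v *\<^sub>R v)"
    using span_finite[of "{a, b, c}"] by blast
  then obtain u where "x = (\<Sum>v\<in>{a, b, c}. u v *\<^sub>R v)"
    by (rule rangeE)
  then have x: "x = u a *\<^sub>R a + u b *\<^sub>R b + u c *\<^sub>R c"
    using distinct_vertices by (simp add: add.assoc)
  define k where "k v = (if v = a then \<lfloor>u a\<rfloor> else if v = b then \<lfloor>u b\<rfloor> else \<lfloor>u c\<rfloor>)" for v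
  define x0 where "x0 = x - (of_int (k a) *\<^sub>R a + of_int (k b) *\<^sub>R b + of_int (k c) *\<^sub>R c)"
  have "x0 \<in> latN"
    unfolding x0_def using \<open>x \<in> latN\<close> vertices_latN by (intro latN_diff latN_add latN_of_int_scaleR)
  moreover have "x0 = (u a - \<lfloor>u a\<rfloor>) *\<^sub>R a + (u b - \<lfloor>u b\<rfloor>) *\<^sub>R b + (u c - \<lfloor>u c\<rfloor>) *\<^sub>R c"
    unfolding x0_def x k_def using distinct_vertices by (simp add: algebra_simps)
  moreover have "0 \<le> r - \<lfloor>r\<rfloor>" "r - \<lfloor>r\<rfloor> < 1" for r :: real
    by linarith+
  ultimately have "x0 = 0"
    using lattice_point_in_half_open_parallelepiped[OF assms] by blast
  then have "x = (\<Sum>v\<in>{a, b, c}. of_int (k v) *\<^sub>R v)"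
    unfolding x0_def using distinct_vertices by (simp add: add.assoc)
  then show "\<exists>k :: real^3 \<Rightarrow> int. \<exists>B'. finite B' \<and> B' \<subseteq> {a, b, c} \<and> x = (\<Sum>v\<in>B'. of_int (k v) *\<^sub>R v)"
    by (intro exI[of _ k] exI[of _ "{a, b, c}"]) simp
qed

lemma min_gens_subset_vertices:
  assumes "a \<in> Hlb \<sigma>" "b \<in> Hlb \<sigma>" "c \<in> Hlb \<sigma>"
  shows "min_gens (pos (convex hull {a, b, c})) \<subseteq> {a, b, c}"
proof
  fix v assume "v \<in> min_gens (pos (convex hull {a, b, c}))"
  then have v: "primitive v" "{t *\<^sub>R v | t. 0 \<le> t} face_of convex_cone hull {a, b, c}"
    unfolding min_gens_def pos_eq_convex_cone_hull convex_cone_hull_convex_hull_eq by auto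
  then obtain w \<alpha> where "w \<in> {a, b, c}" "0 < \<alpha>" "v = \<alpha> *\<^sub>R w"
    using ray_face_of_convex_cone_hull_3[OF independent_vertices distinct_vertices]
    unfolding primitive_def by blast
  moreover have "w \<in> Hlb \<sigma>"
    using assms \<open>w \<in> {a, b, c}\<close> by blast
  ultimately show "v \<in> {a, b, c}"
    using primitive_multiple_of_Hlb v(1) by blast
qed

end

context pointed_lattice_cone
begin

lemma elementary_triangle_on_bounded_faceE:
  assumes "elementary_triangle s" "s \<subseteq> F" "F face_of P" "bounded F"
  obtains a b c where "s = convex hull {a, b, c}" "s \<inter> latN = {a, b, c}"
    "elementary_triangle_on_bounded_face \<sigma> G a b c F"
proof -
  obtain a b c where abc: "card {a, b, c} = 3" "\<not> affine_dependent {a, b, c}"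
    "s = convex hull {a, b, c}" "s \<inter> latN = {a, b, c}"
    using assms(1) unfolding elementary_triangle_def by blast
  have "a \<noteq> b" "a \<noteq> c" "b \<noteq> c"
    using abc(1) by (auto simp: card_insert_if split: if_splits)
  moreover have "convex hull {a, b, c} \<inter> latN = {a, b, c}" "convex hull {a, b, c} \<subseteq> F"
    using abc(3,4) assms(2) by simp_all
  ultimately have "elementary_triangle_on_bounded_face \<sigma> G a b c F"
    using abc(2) assms(3,4)
    by (intro elementary_triangle_on_bounded_face.intro[OF pointed_lattice_cone_axioms]
        elementary_triangle_on_bounded_face_axioms.intro)
  then show ?thesis
    using that abc(3,4) by blast
qed

lemma elementary_triangles_Int_eq_convex_hull:
  assumes "F facet_of P" "F' facet_of P"
    and T: "elementary_triangle_on_bounded_face \<sigma> G a b c F"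
    and T': "elementary_triangle_on_bounded_face \<sigma> G a' b' c' F'"
    and same_facet: "F = F' \<Longrightarrow> (convex hull {a, b, c} \<inter> convex hull {a', b', c'}) face_of convex hull {a, b, c}"
  obtains W where "W \<subseteq> {a, b, c}" "convex hull {a, b, c} \<inter> convex hull {a', b', c'} = convex hull W"
proof (cases "F = F'")
  case True
  then show ?thesis
    using same_facet that
      face_of_convex_hull_affine_independent[OF elementary_triangle_on_bounded_face.affine_independent[OF T]]
    by blast
next
  case False
  note triangle = elementary_triangle_on_bounded_face.affine_independent
    elementary_triangle_on_bounded_face.lattice_free elementary_triangle_on_bounded_face.triangle_subset_face
  have "aff_dim P \<le> 3"
    using aff_dim_le_DIM[of P] by simp
  then have "convex hull {a, b, c} \<inter> convex hull {a', b', c'} = convex hull ({a, b, c} \<inter> {a', b', c'})"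
    by (rule convex_hull_Int_lattice_free_in_distinct_facets[OF _ triangle(1,2)[OF T] assms(1)
          triangle(3)[OF T] triangle(1,2)[OF T'] assms(2) triangle(3)[OF T'] False])
  then show ?thesis
    by (intro that[of "{a, b, c} \<inter> {a', b', c'}"]) simp_all
qed

lemma pos_Int_face_of_pos:
  assumes F: "F facet_of P" "compact F" and F': "F' facet_of P" "compact F'"
    and s: "elementary_triangle s" "s \<subseteq> F" and s': "elementary_triangle s'" "s' \<subseteq> F'"
    and same_facet: "F = F' \<Longrightarrow> (s \<inter> s') face_of s"
  shows "(pos s \<inter> pos s') face_of pos s"
proof -
  have faces: "F face_of P" "bounded F" "F' face_of P" "bounded F'"
    using F(1) F'(1) facet_of_imp_face_of compact_imp_bounded[OF F(2)] compact_imp_bounded[OF F'(2)]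
    by auto
  obtain a b c where abc: "s = convex hull {a, b, c}" "s \<inter> latN = {a, b, c}"
    and T: "elementary_triangle_on_bounded_face \<sigma> G a b c F"
    by (rule elementary_triangle_on_bounded_faceE[OF s faces(1,2)])
  obtain a' b' c' where abc': "s' = convex hull {a', b', c'}" "s' \<inter> latN = {a', b', c'}"
    and T': "elementary_triangle_on_bounded_face \<sigma> G a' b' c' F'"
    by (rule elementary_triangle_on_bounded_faceE[OF s' faces(3,4)])
  obtain W where W: "W \<subseteq> {a, b, c}" "s \<inter> s' = convex hull W"
    using elementary_triangles_Int_eq_convex_hull[OF F(1) F'(1) T T'] same_facet
    unfolding abc(1) abc'(1) by blast
  have "pos s \<inter> pos s' \<subseteq> convex_cone hull (s \<inter> s')"
    unfolding pos_eq_convex_cone_hull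
    using convex_cone_hull_Int_bounded_faces[OF faces] s(2) s'(2) abc(1) abc'(1) by simp
  moreover have "convex_cone hull (s \<inter> s') \<subseteq> pos s \<inter> pos s'"
    unfolding pos_eq_convex_cone_hull by (simp add: hull_mono)
  ultimately have "pos s \<inter> pos s' = convex_cone hull (s \<inter> s')"
    by (rule subset_antisym)
  also have "\<dots> = convex_cone hull W"
    unfolding W(2) by (rule convex_cone_hull_convex_hull_eq)
  finally have "pos s \<inter> pos s' = convex_cone hull W" .
  moreover have "pos s = convex_cone hull {a, b, c}"
    unfolding abc(1) pos_eq_convex_cone_hull convex_cone_hull_convex_hull_eq ..
  ultimately show ?thesis
    using convex_cone_hull_subset_face_of[OF elementary_triangle_on_bounded_face.independent_vertices[OF T] W(1)]
    by metis
qed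

end

section \<open>Triangulations of the compact facets\<close>

locale triangulated_lattice_cone = pointed_lattice_cone +
  fixes T :: "(real^3) set \<Rightarrow> (real^3) set set"
  assumes Hlb_on_compact_facets:
      "Hlb \<sigma> = \<Union>{F. F facet_of convex hull (\<sigma> \<inter> (latN - {0})) \<and> compact F} \<inter> latN"
    and triangulated:
      "\<And>F. F facet_of convex hull (\<sigma> \<inter> (latN - {0})) \<Longrightarrow> compact F \<Longrightarrow> elem_triangulation (T F) F"
begin

definition triangles :: "(real^3) set set"
  where "triangles = \<Union>{T F | F. F facet_of P \<and> compact F}"

lemma triangle_in_compact_facet:
  assumes "s \<in> triangles"
  obtains F where "F facet_of P" "compact F" "s \<in> T F" "elementary_triangle s" "s \<subseteq> F"
proof -
  obtain F where F: "F facet_of P" "compact F" "s \<in> T F"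
    using assms unfolding triangles_def by blast
  then have "elementary_triangle s" "s \<subseteq> F"
    using triangulated[of F] unfolding elem_triangulation_def P_def by blast+
  then show ?thesis
    using that F by blast
qed

lemma lattice_points_of_triangle_in_Hlb:
  assumes "s \<in> triangles"
  shows "s \<inter> latN \<subseteq> Hlb \<sigma>"
proof -
  obtain F where "F facet_of P" "compact F" "s \<subseteq> F"
    using triangle_in_compact_facet[OF assms] by blast
  then show ?thesis
    unfolding Hlb_on_compact_facets P_def[symmetric] by blast
qed

lemma finite_triangles: "finite triangles"
proof -
  have "triangles \<subseteq> (\<lambda>V. convex hull V) ` Pow (Hlb \<sigma>)"
  proof
    fix s assume "s \<in> triangles"
    then have "elementary_triangle s" "s \<inter> latN \<subseteq> Hlb \<sigma>"
      using triangle_in_compact_facet lattice_points_of_triangle_in_Hlb by blast+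
    moreover have "s = convex hull (s \<inter> latN)"
      using \<open>elementary_triangle s\<close> unfolding elementary_triangle_def by force
    ultimately show "s \<in> (\<lambda>V. convex hull V) ` Pow (Hlb \<sigma>)"
      by blast
  qed
  then show ?thesis
    using finite_Hlb finite_subset by blast
qed

lemma basic_cone_pos_triangle:
  assumes "s \<in> triangles"
  shows "basic_cone (pos s) \<and> min_gens (pos s) \<subseteq> Hlb \<sigma>"
proof -
  obtain F where F: "F facet_of P" "compact F" "elementary_triangle s" "s \<subseteq> F"
    using triangle_in_compact_facet[OF assms] by blast
  have "F face_of P" "bounded F"
    using facet_of_imp_face_of[OF F(1)] compact_imp_bounded[OF F(2)] .
  then obtain a b c where abc: "s = convex hull {a, b, c}" "s \<inter> latN = {a, b, c}"
    and T: "elementary_triangle_on_bounded_face \<sigma> G a b c F"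
    by (rule elementary_triangle_on_bounded_faceE[OF F(3,4)])
  have "{a, b, c} \<subseteq> Hlb \<sigma>"
    using lattice_points_of_triangle_in_Hlb[OF assms] abc(2) by simp
  moreover have "Hlb \<sigma> \<subseteq> \<Union>{F'. F' face_of P \<and> bounded F'}"
    unfolding Hlb_on_compact_facets P_def[symmetric] using facet_of_imp_face_of compact_imp_bounded by blast
  ultimately show ?thesis
    unfolding basic_cone_def abc(1)
    using elementary_triangle_on_bounded_face.Z_basis_vertices[OF T]
      elementary_triangle_on_bounded_face.min_gens_subset_vertices[OF T] by blast
qed

lemma pos_triangles_cover: "{0} \<union> \<Union>(pos ` triangles) = \<sigma>"
proof -
  have "pos s \<subseteq> \<sigma>" if "s \<in> triangles" for s
  proof -
    obtain F where "F facet_of P" "s \<subseteq> F"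
      using triangle_in_compact_facet[OF \<open>s \<in> triangles\<close>] by blast
    then have "s \<subseteq> \<sigma>"
      using P_subset_\<sigma> facet_of_imp_subset by blast
    then show ?thesis
      unfolding pos_eq_convex_cone_hull using convex_cone_\<sigma> by (rule hull_minimal)
  qed
  moreover have "x \<in> \<Union>(pos ` triangles)" if x: "x \<in> \<sigma>" "x \<noteq> 0" for x
  proof -
    obtain C t where C: "C facet_of P" "compact C" "0 < t" "t *\<^sub>R x \<in> C"
      using ray_meets_compact_facet[OF x] by blast
    then obtain s where s: "s \<in> T C" "t *\<^sub>R x \<in> s"
      using triangulated[of C] unfolding elem_triangulation_def P_def by blast
    then have "s \<in> triangles"
      unfolding triangles_def using C(1,2) by blast
    moreover have "(1 / t) *\<^sub>R (t *\<^sub>R x) \<in> convex_cone hull s"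
      using s(2) C(3) by (intro convex_cone_hull_mul hull_inc) auto
    then have "x \<in> pos s"
      using C(3) unfolding pos_eq_convex_cone_hull by simp
    ultimately show ?thesis
      by blast
  qed
  ultimately show ?thesis
    using zero_in_\<sigma> by blast
qed

lemma pos_triangles_Int_face_of:
  assumes "s \<in> triangles" "s' \<in> triangles"
  shows "(pos s \<inter> pos s') face_of pos s"
proof -
  obtain F where F: "F facet_of P" "compact F" "s \<in> T F" "elementary_triangle s" "s \<subseteq> F"
    using triangle_in_compact_facet[OF assms(1)] by blast
  obtain F' where F': "F' facet_of P" "compact F'" "s' \<in> T F'" "elementary_triangle s'" "s' \<subseteq> F'"
    using triangle_in_compact_facet[OF assms(2)] by blast
  have "(s \<inter> s') face_of s" if "F = F'"
    using triangulated[of F] F(1-3) F'(3) that unfolding elem_triangulation_def P_def by blast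
  then show ?thesis
    by (rule pos_Int_face_of_pos[OF F(1,2) F'(1,2) F(4,5) F'(4,5)])
qed

lemma cone_subdivision_pos_triangles: "cone_subdivision (pos ` triangles) \<sigma>"
  unfolding cone_subdivision_def
proof (intro conjI ballI)
  show "finite (pos ` triangles)"
    using finite_triangles by simp
  show "{0} \<union> \<Union>(pos ` triangles) = \<sigma>"
    by (rule pos_triangles_cover)
  fix \<tau> \<tau>' assume "\<tau> \<in> pos ` triangles" "\<tau>' \<in> pos ` triangles"
  then obtain s s' where "s \<in> triangles" "s' \<in> triangles" "\<tau> = pos s" "\<tau>' = pos s'"
    by blast
  then show "(\<tau> \<inter> \<tau>') face_of \<tau>" "(\<tau> \<inter> \<tau>') face_of \<tau>'"
    using pos_triangles_Int_face_of[of s s'] pos_triangles_Int_face_of[of s' s]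
    by (simp_all add: Int_commute)
qed

end

lemma rational_sc_cone_imp_pointed_lattice_cone:
  assumes "rational_sc_cone \<sigma>"
  obtains G where "pointed_lattice_cone \<sigma> G"
proof -
  obtain G where G: "finite G" "G \<subseteq> latN" "\<sigma> = pos G" and pointed: "\<sigma> \<inter> uminus ` \<sigma> \<subseteq> {0}"
    using assms unfolding rational_sc_cone_def by auto
  have "G \<subseteq> convex_cone hull (G - {0})"
  proof
    fix g assume "g \<in> G"
    then show "g \<in> convex_cone hull (G - {0})"
      by (cases "g = 0") (simp_all add: convex_cone_hull_contains_0 hull_inc)
  qed
  then have "convex_cone hull G \<subseteq> convex_cone hull (G - {0})"
    using convex_cone_convex_cone_hull by (rule hull_minimal)
  moreover have "convex_cone hull (G - {0}) \<subseteq> convex_cone hull G"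
    by (rule hull_mono) (rule Diff_subset)
  ultimately have "\<sigma> = convex_cone hull (G - {0})"
    unfolding G(3) pos_eq_convex_cone_hull by (rule subset_antisym)
  moreover have "finite (G - {0})" "G - {0} \<subseteq> latN" "0 \<notin> G - {0}"
    using G(1,2) by auto
  ultimately have "pointed_lattice_cone \<sigma> (G - {0})"
    using pointed by (intro pointed_lattice_cone.intro)
  then show ?thesis
    by (rule that)
qed

theorem lemma6p8:
  fixes \<sigma> :: "(real^3) set"
    and T :: "(real^3) set \<Rightarrow> (real^3) set set"
  assumes "rational_sc_cone \<sigma>"
    and "Hlb \<sigma> = \<Union>{F. F facet_of convex hull (\<sigma> \<inter> (latN - {0})) \<and> compact F} \<inter> latN"
    and "\<forall>F. F facet_of convex hull (\<sigma> \<inter> (latN - {0})) \<and> compact F \<longrightarrow> elem_triangulation (T F) F"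
  shows "cone_subdivision
           (pos ` \<Union>{T F | F. F facet_of convex hull (\<sigma> \<inter> (latN - {0})) \<and> compact F}) \<sigma>
         \<and> (\<forall>F. F facet_of convex hull (\<sigma> \<inter> (latN - {0})) \<and> compact F \<longrightarrow>
              (\<forall>s\<in>T F. basic_cone (pos s) \<and> min_gens (pos s) \<subseteq> Hlb \<sigma>))"
proof -
  obtain G where "pointed_lattice_cone \<sigma> G"
    using rational_sc_cone_imp_pointed_lattice_cone[OF assms(1)] .
  moreover have "triangulated_lattice_cone_axioms \<sigma> T"
    using assms(2,3) by (intro triangulated_lattice_cone_axioms.intro) simp_all
  ultimately interpret triangulated_lattice_cone \<sigma> G T
    by (intro triangulated_lattice_cone.intro)
  have "\<forall>F. F facet_of P \<and> compact F \<longrightarrow> (\<forall>s\<in>T F. basic_cone (pos s) \<and> min_gens (pos s) \<subseteq> Hlb \<sigma>)"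
    using basic_cone_pos_triangle unfolding triangles_def by blast
  with cone_subdivision_pos_triangles show ?thesis
    unfolding triangles_def P_def by blast
qed

end
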